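(* Consider any finite game in extensive form with perfect recall. Let $\bar\beta^1$ be a profile of full-support belief systems and $\beta^1$ a profile of full-support beliefs in the associated normal form consistent with $\bar\beta^1$. Then for every $k\ge1$, $Z(\bar L^k(\bar\beta^1))\subseteq Z(L^k(\beta^1))$, i.e., every terminal history reached by a profile of strong level-$k$ thinking strategies is reached by a profile of normal-form level-$k$ thinking strategies.
   Context: Setting: a finite extensive-form game with finite player set $N$, possibly moves of nature $c$ (treated as a player with singleton information sets, indifferent among outcomes), possibly simultaneous moves, imperfect information, finite horizon and perfect recall. $Z$ is the set of terminal histories; $u_i:Z\to\mathbb{R}$ is player $i$'s utility; $\mathcal{I}_i$ is the set of information sets of player $i$. A strategy $s_i$ assigns an available action to each $I_i\in\mathcal I_i$; $S_i$ is the set of strategies; $S_{-i}$ is the product of other players' strategy sets and nature's (if nature moves). $z(s)$ is the terminal history reached by profile $s$. A profile $s_{-i}$ reaches $I_i$ if some $s_i$ makes $(s_i,s_{-i})$ reach $I_i$; $s_i$ reaches $I_i$ if some $s_{-i}$ makes $(s_i,s_{-i})$ reach $I_i$. $S_{-i}(I_i)$ is the set of $s_{-i}$ reaching $I_i$. For a set of profiles $S'$, $Z(S')=\{z(s):s\in S'\}$; for sets $X_j\subseteq S_j$ ($j\in N$), profiles are formed with nature's strategy unrestricted, i.e., $X_{-i}=\times_{j\in N\setminus\{i\}}X_j\times S_c$ and $Z(\times_{j\in N}X_j)=\{z(s): s_j\in X_j\ \forall j\in N,\ s_c\in S_c\}$. Belief systems: $\bar\beta_i=(\bar\beta_i(I_i))_{I_i\in\mathcal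 I_i}$, $\bar\beta_i(I_i)\in\Delta(S_{-i})$, $\bar\beta_i(I_i)(S_{-i}(I_i))=1$, and if $I_i$ precedes $I_i'$ then $\bar\beta_i(I_i')$ is obtained from $\bar\beta_i(I_i)$ by conditioning whenever possible; $\bar B_i$ is the set of belief systems of $i$. Full-support: each $\bar\beta_i(I_i)$ gives positive probability to every element of $S_{-i}(I_i)$. $s_i'$ is an $I_i$-replacement of $s_i$ if it agrees with $s_i$ on all information sets strictly preceding $I_i$. $s_i$ is rational at $I_i$ with $\bar\beta_i$ if $s_i$ does not reach $I_i$ or no $I_i$-replacement of $s_i$ gives strictly higher expected utility w.r.t. $\bar\beta_i(I_i)$. Strong level-$k$ thinking: $\bar B_i^1(\bar\beta^1)=\{\bar\beta_i^1\}$, $\bar L_i^1(\bar\beta^1)=\{s_i: s_i \text{ rational at every } I_i \text{ with }\bar\beta_i^1\}$. For $k\ge2$, $\bar B_i^k(\bar\beta^1)$ is the set of $\bar\beta_i\in\bar B_i$ such that for every $I_i\in\mathcal I_i$: if there is $\ell$ with $1\le\ell<k$ and some $s_{-i}\in\bar L^\ell_{-i}(\bar\beta^1)$ reaching $I_i$, then, letting $\bar\ell$ be the largest such $\ell$, $\bar\beta_i(I_i)(\bar L^{\bar\ell}_{-i}(\bar\beta^1))=1$; otherwise $\bar\beta_i(I_i)=\bar\beta_i^1(I_i)$. Then $\bar L_i^k(\bar\beta^1)=\{s_i:\exists\bar\beta_i\in\bar B_i^k(\bar\beta^1)\text{ with which } s_i\text{ is rational at every } I_i\in\mathcal I_i\}$,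 and $\bar L^k(\bar\beta^1)=\times_{i\in N}\bar L^k_i(\bar\beta^1)$. Associated normal form: actions $S_i$, payoff of profile $s$ is $u_i(z(s))$. $\beta^1_i\in\Delta(S_{-i})$ is full-support if it gives positive probability to all of $S_{-i}$, and consistent with $\bar\beta^1_i$ if $\bar\beta^1_i(I_i)=\beta^1_i(\cdot\mid S_{-i}(I_i))$ for all $I_i$. Normal-form level-$k$: $L_i^1(\beta^1)$ is the set of expected-utility maximizers against $\beta^1_i$; for $k\ge2$, $L_i^k(\beta^1)$ is the set of $s_i$ that maximize expected utility against some $\beta_i\in\Delta(S_{-i})$ with $\beta_i(L^{k-1}_{-i}(\beta^1))=1$; $L^k(\beta^1)=\times_{i\in N}L^k_i(\beta^1)$. *)

theory Defs
  imports "HOL-Probability.Probability" "HOL-Library.Sublist"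
begin

text \<open>A history is a list of move profiles; at each stage every active player (possibly
nature) chooses an action (Some a), inactive players have None.\<close>

type_synonym ('i,'a) hist = "('i \<Rightarrow> 'a option) list"
type_synonym ('i,'a) strat = "('i,'a) hist \<Rightarrow> 'a"
type_synonym ('i,'a) prof = "'i \<Rightarrow> ('i,'a) strat"

record ('i,'a) efg =
  players :: "'i set"
  nature  :: 'i
  hists   :: "('i,'a) hist set"
  acts    :: "'i \<Rightarrow> ('i,'a) hist \<Rightarrow> 'a set"
  info    :: "'i \<Rightarrow> ('i,'a) hist \<Rightarrow> ('i,'a) hist set"
  pay     :: "'i \<Rightarrow> ('i,'a) hist \<Rightarrow> real"

definition allpl :: "('i,'a) efg \<Rightarrow> 'i set" where
  "allpl G = insert (nature G) (players G)"

definition active :: "('i,'a) efg \<Rightarrow> ('i,'a) hist \<Rightarrow> 'i set" where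
  "active G h = {j. acts G j h \<noteq> {}}"

definition moveprof :: "('i,'a) efg \<Rightarrow> ('i,'a) hist \<Rightarrow> ('i \<Rightarrow> 'a option) \<Rightarrow> bool" where
  "moveprof G h m \<longleftrightarrow> (\<forall>j. (j \<in> active G h \<longrightarrow> (\<exists>a\<in>acts G j h. m j = Some a))
                          \<and> (j \<notin> active G h \<longrightarrow> m j = None))"

definition terminals :: "('i,'a) efg \<Rightarrow> ('i,'a) hist set" where
  "terminals G = {h \<in> hists G. active G h = {}}"

definition exper :: "('i,'a) efg \<Rightarrow> 'i \<Rightarrow> ('i,'a) hist \<Rightarrow> (('i,'a) hist set \<times> 'a) list" where
  "exper G j h = [(info G j (take k h), the ((h ! k) j)). k \<leftarrow> [0..<length h], j \<in> active G (take k h)]"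

definition wf_efg :: "('i,'a) efg \<Rightarrow> bool" where
  "wf_efg G \<longleftrightarrow>
     finite (players G) \<and> nature G \<notin> players G \<and>
     finite (hists G) \<and> [] \<in> hists G \<and>
     (\<forall>h h'. h @ h' \<in> hists G \<longrightarrow> h \<in> hists G) \<and>
     (\<forall>h\<in>hists G. \<forall>m. h @ [m] \<in> hists G \<longleftrightarrow> active G h \<noteq> {} \<and> moveprof G h m) \<and>
     (\<forall>h\<in>hists G. active G h \<subseteq> allpl G) \<and>
     (\<forall>h\<in>hists G. nature G \<in> active G h \<longrightarrow> info G (nature G) h = {h}) \<and>
     (\<forall>j\<in>allpl G. \<forall>h\<in>hists G. j \<in> active G h \<longrightarrow>
         h \<in> info G j h \<and> info G j h \<subseteq> {h' \<in> hists G. j \<in> active G h'} \<and>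
         (\<forall>h'\<in>info G j h. info G j h' = info G j h \<and> acts G j h' = acts G j h)) \<and>
     \<comment> \<open>perfect recall\<close>
     (\<forall>j\<in>players G. \<forall>h\<in>hists G. j \<in> active G h \<longrightarrow>
         (\<forall>h'\<in>info G j h. exper G j h' = exper G j h))"

definition infosets :: "('i,'a) efg \<Rightarrow> 'i \<Rightarrow> ('i,'a) hist set set" where
  "infosets G i = {info G i h | h. h \<in> hists G \<and> i \<in> active G h}"

definition precedes :: "('i,'a) hist set \<Rightarrow> ('i,'a) hist set \<Rightarrow> bool" where
  "precedes I I' \<longleftrightarrow> (\<exists>h\<in>I. \<exists>h'\<in>I'. strict_prefix h h')"

text \<open>A strategy assigns an available action to each information set; represented as a
function on histories, constant on information sets, and undefined off the player's histories.\<close>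
definition strats :: "('i,'a) efg \<Rightarrow> 'i \<Rightarrow> ('i,'a) strat set" where
  "strats G j = {s. (\<forall>h\<in>hists G. j \<in> active G h \<longrightarrow>
                       s h \<in> acts G j h \<and> (\<forall>h'\<in>info G j h. s h' = s h)) \<and>
                   (\<forall>h. \<not> (h \<in> hists G \<and> j \<in> active G h) \<longrightarrow> s h = undefined)}"

definition profs :: "('i,'a) efg \<Rightarrow> ('i,'a) prof set" where
  "profs G = {s. \<forall>j. (j \<in> allpl G \<longrightarrow> s j \<in> strats G j) \<and> (j \<notin> allpl G \<longrightarrow> s j = undefined)}"

definition opps :: "('i,'a) efg \<Rightarrow> 'i \<Rightarrow> ('i,'a) prof set" where
  "opps G i = {s. \<forall>j. (j \<in> allpl G \<and> j \<noteq> i \<longrightarrow> s j \<in> strats G j) \<and>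
                      (\<not> (j \<in> allpl G \<and> j \<noteq> i) \<longrightarrow> s j = undefined)}"

definition mv :: "('i,'a) efg \<Rightarrow> ('i,'a) prof \<Rightarrow> ('i,'a) hist \<Rightarrow> ('i \<Rightarrow> 'a option)" where
  "mv G s h = (\<lambda>j. if j \<in> active G h then Some (s j h) else None)"

definition reaches :: "('i,'a) efg \<Rightarrow> ('i,'a) prof \<Rightarrow> ('i,'a) hist \<Rightarrow> bool" where
  "reaches G s h \<longleftrightarrow> h \<in> hists G \<and> (\<forall>k < length h. h ! k = mv G s (take k h))"

definition outcome :: "('i,'a) efg \<Rightarrow> ('i,'a) prof \<Rightarrow> ('i,'a) hist" where
  "outcome G s = (THE h. h \<in> terminals G \<and> reaches G s h)"

definition reachesI :: "('i,'a) efg \<Rightarrow> ('i,'a) prof \<Rightarrow> ('i,'a) hist set \<Rightarrow> bool" where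
  "reachesI G s I \<longleftrightarrow> (\<exists>h\<in>I. reaches G s h)"

definition opp_reaches :: "('i,'a) efg \<Rightarrow> 'i \<Rightarrow> ('i,'a) prof \<Rightarrow> ('i,'a) hist set \<Rightarrow> bool" where
  "opp_reaches G i \<sigma> I \<longleftrightarrow> (\<exists>si\<in>strats G i. reachesI G (\<sigma>(i := si)) I)"

definition strat_reaches :: "('i,'a) efg \<Rightarrow> 'i \<Rightarrow> ('i,'a) strat \<Rightarrow> ('i,'a) hist set \<Rightarrow> bool" where
  "strat_reaches G i si I \<longleftrightarrow> (\<exists>\<sigma>\<in>opps G i. reachesI G (\<sigma>(i := si)) I)"

definition oppsI :: "('i,'a) efg \<Rightarrow> 'i \<Rightarrow> ('i,'a) hist set \<Rightarrow> ('i,'a) prof set" where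
  "oppsI G i I = {\<sigma> \<in> opps G i. opp_reaches G i \<sigma> I}"

definition Zset :: "('i,'a) efg \<Rightarrow> ('i \<Rightarrow> ('i,'a) strat set) \<Rightarrow> ('i,'a) hist set" where
  "Zset G X = outcome G ` {s \<in> profs G. \<forall>j\<in>players G. s j \<in> X j}"

definition oppsX :: "('i,'a) efg \<Rightarrow> ('i \<Rightarrow> ('i,'a) strat set) \<Rightarrow> 'i \<Rightarrow> ('i,'a) prof set" where
  "oppsX G X i = {\<sigma> \<in> opps G i. \<forall>j\<in>players G. j \<noteq> i \<longrightarrow> \<sigma> j \<in> X j}"

definition EU :: "('i,'a) efg \<Rightarrow> 'i \<Rightarrow> ('i,'a) prof pmf \<Rightarrow> ('i,'a) strat \<Rightarrow> real" where
  "EU G i b si = measure_pmf.expectation b (\<lambda>\<sigma>. pay G i (outcome G (\<sigma>(i := si))))"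

type_synonym ('i,'a) bsys = "('i,'a) hist set \<Rightarrow> ('i,'a) prof pmf"

definition belief_systems :: "('i,'a) efg \<Rightarrow> 'i \<Rightarrow> ('i,'a) bsys set" where
  "belief_systems G i = {\<beta>. (\<forall>I\<in>infosets G i. set_pmf (\<beta> I) \<subseteq> oppsI G i I) \<and>
      (\<forall>I\<in>infosets G i. \<forall>I'\<in>infosets G i. precedes I I' \<and>
          measure_pmf.prob (\<beta> I) (oppsI G i I') > 0 \<longrightarrow>
          \<beta> I' = cond_pmf (\<beta> I) (oppsI G i I'))}"

definition full_support_bs :: "('i,'a) efg \<Rightarrow> 'i \<Rightarrow> ('i,'a) bsys \<Rightarrow> bool" where
  "full_support_bs G i \<beta> \<longleftrightarrow> (\<forall>I\<in>infosets G i. set_pmf (\<beta> I) = oppsI G i I)"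

definition replacement :: "('i,'a) efg \<Rightarrow> 'i \<Rightarrow> ('i,'a) hist set \<Rightarrow> ('i,'a) strat \<Rightarrow> ('i,'a) strat \<Rightarrow> bool" where
  "replacement G i I s' s \<longleftrightarrow> s' \<in> strats G i \<and>
     (\<forall>I'\<in>infosets G i. precedes I' I \<longrightarrow> (\<forall>h\<in>I'. s' h = s h))"

definition rational_at :: "('i,'a) efg \<Rightarrow> 'i \<Rightarrow> ('i,'a) bsys \<Rightarrow> ('i,'a) strat \<Rightarrow> ('i,'a) hist set \<Rightarrow> bool" where
  "rational_at G i \<beta> s I \<longleftrightarrow> \<not> strat_reaches G i s I \<or>
     (\<forall>s'. replacement G i I s' s \<longrightarrow> EU G i (\<beta> I) s' \<le> EU G i (\<beta> I) s)"

definition rational_all :: "('i,'a) efg \<Rightarrow> 'i \<Rightarrow> ('i,'a) bsys \<Rightarrow> ('i,'a) strat \<Rightarrow> bool" where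
  "rational_all G i \<beta> s \<longleftrightarrow> s \<in> strats G i \<and> (\<forall>I\<in>infosets G i. rational_at G i \<beta> s I)"

text \<open>Given the list ls = [L^1, ..., L^(k-1)] of previous levels, the belief sets B^k_i.\<close>
definition Bk :: "('i,'a) efg \<Rightarrow> ('i \<Rightarrow> ('i,'a) bsys) \<Rightarrow> ('i \<Rightarrow> ('i,'a) strat set) list \<Rightarrow> 'i \<Rightarrow> ('i,'a) bsys set" where
  "Bk G \<beta>1 ls i =
    (if ls = [] then {\<beta>1 i}
     else {\<beta> \<in> belief_systems G i. \<forall>I\<in>infosets G i.
        (if \<exists>l\<in>{1..length ls}. \<exists>\<sigma>\<in>oppsX G (ls ! (l - 1)) i. opp_reaches G i \<sigma> I
         then set_pmf (\<beta> I) \<subseteq> oppsX G (ls ! ((GREATEST l. l \<in> {1..length ls} \<and>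
                      (\<exists>\<sigma>\<in>oppsX G (ls ! (l - 1)) i. opp_reaches G i \<sigma> I)) - 1)) i
         else \<beta> I = \<beta>1 i I)})"

definition next_level :: "('i,'a) efg \<Rightarrow> ('i \<Rightarrow> ('i,'a) bsys) \<Rightarrow> ('i \<Rightarrow> ('i,'a) strat set) list \<Rightarrow> 'i \<Rightarrow> ('i,'a) strat set" where
  "next_level G \<beta>1 ls i = {s. \<exists>\<beta>\<in>Bk G \<beta>1 ls i. rational_all G i \<beta> s}"

primrec strong_levels :: "('i,'a) efg \<Rightarrow> ('i \<Rightarrow> ('i,'a) bsys) \<Rightarrow> nat \<Rightarrow> ('i \<Rightarrow> ('i,'a) strat set) list" where
  "strong_levels G \<beta>1 0 = []"
| "strong_levels G \<beta>1 (Suc n) = strong_levels G \<beta>1 n @ [next_level G \<beta>1 (strong_levels G \<beta>1 n)]"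

text \<open>\<open>strong_L G \<beta>1 k i\<close> is the set bar-L^k_i(bar-beta^1) (for k >= 1).\<close>
definition strong_L :: "('i,'a) efg \<Rightarrow> ('i \<Rightarrow> ('i,'a) bsys) \<Rightarrow> nat \<Rightarrow> 'i \<Rightarrow> ('i,'a) strat set" where
  "strong_L G \<beta>1 k = strong_levels G \<beta>1 k ! (k - 1)"

definition best_reply :: "('i,'a) efg \<Rightarrow> 'i \<Rightarrow> ('i,'a) prof pmf \<Rightarrow> ('i,'a) strat \<Rightarrow> bool" where
  "best_reply G i b s \<longleftrightarrow> s \<in> strats G i \<and> (\<forall>s'\<in>strats G i. EU G i b s' \<le> EU G i b s)"

fun nf_L :: "('i,'a) efg \<Rightarrow> ('i \<Rightarrow> ('i,'a) prof pmf) \<Rightarrow> nat \<Rightarrow> 'i \<Rightarrow> ('i,'a) strat set" where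
  "nf_L G b 0 i = strats G i"
| "nf_L G b (Suc 0) i = {s. best_reply G i (b i) s}"
| "nf_L G b (Suc (Suc n)) i =
     {s. \<exists>\<beta>. set_pmf \<beta> \<subseteq> oppsX G (nf_L G b (Suc n)) i \<and> best_reply G i \<beta> s}"

definition full_support_nf :: "('i,'a) efg \<Rightarrow> 'i \<Rightarrow> ('i,'a) prof pmf \<Rightarrow> bool" where
  "full_support_nf G i b \<longleftrightarrow> set_pmf b = opps G i"

definition consistent :: "('i,'a) efg \<Rightarrow> 'i \<Rightarrow> ('i,'a) prof pmf \<Rightarrow> ('i,'a) bsys \<Rightarrow> bool" where
  "consistent G i b \<beta> \<longleftrightarrow> (\<forall>I\<in>infosets G i. \<beta> I = cond_pmf b (oppsI G i I))"

end

theory Submission imports Defs begin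

text \<open>The proof compares the two hierarchies strategy-set-wise: every strong level-\<open>k\<close> strategy
is a normal-form level-\<open>k\<close> strategy, which gives the inclusion of outcomes.

A strategy that is rational at every information set for a belief system obtained by conditioning
a prior is a best reply to that prior: the prior's expected gain from any deviation splits into the
conditional gains at the player's initial information sets, each nonpositive by rationality there,
while opponent profiles reaching none of the player's information sets make the deviation
irrelevant. At level \<open>k + 1\<close>, a strong level-\<open>(k + 1)\<close> strategy is in the same way a best reply to the
uniform mixture of its beliefs at the initial information sets reached by level-\<open>k\<close> opponents, and
these beliefs are concentrated on level-\<open>k\<close> profiles.

This needs the strong levels to be nonempty. A sequentially rational strategy for a belief system
in \<open>B\<^sup>k\<close> is obtained as a lexicographic best reply to the priors that are uniform on the opponent
profiles of levels \<open>k - 1, \<dots>, 1\<close>, followed by the full-support prior; the belief system conditions,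
at each information set, the first of these priors that reaches it.\<close>

lemma measure_pmf_prob_finite:
  assumes "finite (set_pmf p)"
  shows "measure_pmf.prob p B = (\<Sum>x\<in>set_pmf p \<inter> B. pmf p x)"
proof -
  have "measure_pmf.prob p B = measure_pmf.prob p (B \<inter> set_pmf p)" by (simp add: measure_Int_set_pmf)
  also have "\<dots> = (\<Sum>x\<in>B \<inter> set_pmf p. pmf p x)" using assms by (simp add: measure_measure_pmf_finite)
  finally show ?thesis by (simp add: Int_commute)
qed

lemma cond_pmf_cond_pmf:
  assumes fin: "finite (set_pmf p)" and A: "set_pmf p \<inter> A \<noteq> {}"
    and B: "set_pmf (cond_pmf p A) \<inter> B \<noteq> {}"
  shows "cond_pmf (cond_pmf p A) B = cond_pmf p (A \<inter> B)"
proof -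
  have AB: "set_pmf p \<inter> (A \<inter> B) \<noteq> {}" using B set_cond_pmf[OF A] by auto
  have PA: "measure_pmf.prob p A > 0" using A by (auto intro: measure_pmf_posI)
  have fin': "finite (set_pmf (cond_pmf p A))" using fin set_cond_pmf[OF A] by simp
  have "measure_pmf.prob (cond_pmf p A) B = (\<Sum>x\<in>set_pmf p \<inter> A \<inter> B. pmf p x / measure_pmf.prob p A)"
    using measure_pmf_prob_finite[OF fin', of B] set_cond_pmf[OF A] pmf_cond[OF A]
    by (simp add: Int_assoc)
  also have "\<dots> = measure_pmf.prob p (A \<inter> B) / measure_pmf.prob p A"
    using measure_pmf_prob_finite[OF fin, of "A \<inter> B"] by (simp add: sum_divide_distrib Int_assoc)
  finally have PB: "measure_pmf.prob (cond_pmf p A) B = measure_pmf.prob p (A \<inter> B) / measure_pmf.prob p A" .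
  show ?thesis
    by (rule pmf_eqI) (use PA in \<open>simp add: pmf_cond[OF B] pmf_cond[OF AB] pmf_cond[OF A] PB\<close>)
qed

locale game =
  fixes G :: "('i,'a) efg"
  assumes wf: "wf_efg G"
begin

lemmas wf_efg_conjuncts = wf[unfolded wf_efg_def]

lemma finite_players: "finite (players G)"
  using wf_efg_conjuncts by (elim conjE)

lemma finite_hists: "finite (hists G)"
  using wf_efg_conjuncts by (elim conjE)

lemma Nil_in_hists: "[] \<in> hists G"
  using wf_efg_conjuncts by (elim conjE)

lemma hists_prefix_closed: "\<forall>h h'. h @ h' \<in> hists G \<longrightarrow> h \<in> hists G"
  using wf_efg_conjuncts by (elim conjE) assumption

lemma hists_snoc: "\<forall>h\<in>hists G. \<forall>m. h @ [m] \<in> hists G \<longleftrightarrow> active G h \<noteq> {} \<and> moveprof G h m"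
  using wf_efg_conjuncts by (elim conjE) assumption

lemma active_allpl: "\<forall>h\<in>hists G. active G h \<subseteq> allpl G"
  using wf_efg_conjuncts by (elim conjE) assumption

lemma info_consistent: "\<forall>j\<in>allpl G. \<forall>h\<in>hists G. j \<in> active G h \<longrightarrow>
    h \<in> info G j h \<and> info G j h \<subseteq> {h' \<in> hists G. j \<in> active G h'} \<and>
    (\<forall>h'\<in>info G j h. info G j h' = info G j h \<and> acts G j h' = acts G j h)"
  using wf_efg_conjuncts by (elim conjE) assumption

lemma perfect_recall_exper: "\<forall>j\<in>players G. \<forall>h\<in>hists G. j \<in> active G h \<longrightarrow>
    (\<forall>h'\<in>info G j h. exper G j h' = exper G j h)"
  using wf_efg_conjuncts by (elim conjE) assumption

lemma hists_appendD: "h @ h' \<in> hists G \<Longrightarrow> h \<in> hists G"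
  using hists_prefix_closed by blast

lemma hists_snoc_iff: "h \<in> hists G \<Longrightarrow> h @ [m] \<in> hists G \<longleftrightarrow> active G h \<noteq> {} \<and> moveprof G h m"
  using hists_snoc by blast

lemma active_subset_allpl: "h \<in> hists G \<Longrightarrow> active G h \<subseteq> allpl G"
  using active_allpl by blast

lemma info_props:
  assumes "j \<in> allpl G" "h \<in> hists G" "j \<in> active G h"
  shows "h \<in> info G j h" "info G j h \<subseteq> {h' \<in> hists G. j \<in> active G h'}"
    "h' \<in> info G j h \<Longrightarrow> info G j h' = info G j h \<and> acts G j h' = acts G j h"
  using info_consistent assms by blast+

lemma perfect_recall:
  "j \<in> players G \<Longrightarrow> h \<in> hists G \<Longrightarrow> j \<in> active G h \<Longrightarrow> h' \<in> info G j h \<Longrightarrow>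
   exper G j h' = exper G j h"
  using perfect_recall_exper by blast

lemma hists_take: "h \<in> hists G \<Longrightarrow> take k h \<in> hists G"
  using hists_appendD[of "take k h" "drop k h"] by simp

lemma player_in_allpl: "i \<in> players G \<Longrightarrow> i \<in> allpl G"
  by (simp add: allpl_def)

subsection \<open>Plays and outcomes\<close>

definition valid_prof :: "('i,'a) prof \<Rightarrow> bool" where
  "valid_prof s \<longleftrightarrow> (\<forall>h\<in>hists G. \<forall>j\<in>active G h. s j h \<in> acts G j h)"

lemma strats_act: "s \<in> strats G j \<Longrightarrow> h \<in> hists G \<Longrightarrow> j \<in> active G h \<Longrightarrow> s h \<in> acts G j h"
  unfolding strats_def by blast

lemma strats_const_on_info:
  "s \<in> strats G j \<Longrightarrow> h \<in> hists G \<Longrightarrow> j \<in> active G h \<Longrightarrow> h' \<in> info G j h \<Longrightarrow> s h' = s h"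
  unfolding strats_def by blast

lemma valid_prof_upd:
  assumes "\<sigma> \<in> opps G i" "x \<in> strats G i"
  shows "valid_prof (\<sigma>(i := x))"
  unfolding valid_prof_def
proof (intro ballI)
  fix h j assume h: "h \<in> hists G" and j: "j \<in> active G h"
  then have "j \<in> allpl G" using active_subset_allpl by blast
  show "(\<sigma>(i := x)) j h \<in> acts G j h"
  proof (cases "j = i")
    case True then show ?thesis using assms(2) h j strats_act by simp
  next
    case False
    then have "\<sigma> j \<in> strats G j" using assms(1) \<open>j \<in> allpl G\<close> by (simp add: opps_def)
    then show ?thesis using False h j strats_act by simp
  qed
qed

lemma reaches_take: "reaches G s h \<Longrightarrow> reaches G s (take k h)"
  unfolding reaches_def using hists_take by (auto simp: min_def)

lemma reaches_hists: "reaches G s h \<Longrightarrow> h \<in> hists G"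
  unfolding reaches_def by blast

lemma reaches_move: "reaches G s h \<Longrightarrow> k < length h \<Longrightarrow> j \<in> active G (take k h) \<Longrightarrow>
   the ((h ! k) j) = s j (take k h)"
  unfolding reaches_def mv_def by simp

lemma reaches_cong:
  "reaches G s h \<Longrightarrow> (\<And>k. k < length h \<Longrightarrow> mv G s' (take k h) = mv G s (take k h)) \<Longrightarrow> reaches G s' h"
  unfolding reaches_def by simp

lemma mv_upd_cong: "(i \<in> active G h \<Longrightarrow> y h = x h) \<Longrightarrow> mv G (\<sigma>(i := y)) h = mv G (\<sigma>(i := x)) h"
  unfolding mv_def by (rule ext) auto

lemma reaches_prefix:
  assumes "reaches G s h1" "reaches G s h2" "length h1 \<le> length h2"
  shows "h1 = take (length h1) h2"
proof -
  have "k \<le> length h1 \<longrightarrow> take k h1 = take k h2" for k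
  proof (induction k)
    case (Suc k)
    show ?case
    proof
      assume k: "Suc k \<le> length h1"
      then have e: "take k h1 = take k h2" using Suc by simp
      have "h1 ! k = mv G s (take k h1)" using assms(1) k unfolding reaches_def by simp
      moreover have "h2 ! k = mv G s (take k h2)" using assms(2,3) k unfolding reaches_def by simp
      ultimately have "h1 ! k = h2 ! k" using e by simp
      then show "take (Suc k) h1 = take (Suc k) h2"
        using e k assms(3) by (simp add: take_Suc_conv_app_nth)
    qed
  qed simp
  then show ?thesis by (metis order_refl take_all)
qed

lemma reaches_snoc:
  assumes "reaches G s h" "valid_prof s" "active G h \<noteq> {}"
  shows "reaches G s (h @ [mv G s h])"
proof -
  have h: "h \<in> hists G" using assms(1) reaches_hists by blast
  have "moveprof G h (mv G s h)"
    using assms(2) h unfolding valid_prof_def moveprof_def mv_def by auto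
  then have "h @ [mv G s h] \<in> hists G" using hists_snoc_iff[OF h] assms(3) by simp
  then show ?thesis using assms(1) unfolding reaches_def by (auto simp: nth_append)
qed

lemma reaches_terminal_prefix:
  assumes "reaches G s h" "reaches G s z" "z \<in> terminals G"
  shows "h = take (length h) z"
proof (cases "length h \<le> length z")
  case True then show ?thesis using reaches_prefix assms by blast
next
  case False
  then have zh: "z = take (length z) h" using reaches_prefix assms by simp
  have "take (Suc (length z)) h \<in> hists G" using assms(1) hists_take reaches_hists by blast
  moreover have "take (Suc (length z)) h = z @ [h ! length z]"
    using False zh by (metis not_le take_Suc_conv_app_nth)
  moreover have "z \<in> hists G" using assms(3) by (simp add: terminals_def)
  ultimately have "active G z \<noteq> {}" using hists_snoc_iff by auto
  then show ?thesis using assms(3) by (simp add: terminals_def)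
qed

text \<open>A longest reached history exists by finiteness and must be terminal.\<close>
lemma ex_reached_terminal:
  assumes "valid_prof s"
  shows "\<exists>z. z \<in> terminals G \<and> reaches G s z"
proof -
  let ?R = "{h. reaches G s h}"
  have fin: "finite ?R" using finite_hists by (rule finite_subset[rotated]) (auto simp: reaches_def)
  have "[] \<in> ?R" using Nil_in_hists by (simp add: reaches_def)
  then have "Max (length ` ?R) \<in> length ` ?R" using fin by (intro Max_in) auto
  then obtain h where h: "h \<in> ?R" and hmax: "length h = Max (length ` ?R)" by auto
  have longest: "\<forall>h'\<in>?R. length h' \<le> length h" using fin hmax by auto
  show ?thesis
  proof (cases "active G h = {}")
    case True then show ?thesis using h by (auto simp: terminals_def reaches_def)
  next
    case False
    then have "h @ [mv G s h] \<in> ?R" using reaches_snoc assms h by auto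
    then show ?thesis using longest by fastforce
  qed
qed

lemma reached_terminal_unique:
  assumes "reaches G s z" "reaches G s z'" "z \<in> terminals G" "z' \<in> terminals G"
  shows "z = z'"
proof -
  have "z = take (length z) z'" "z' = take (length z') z"
    using reaches_terminal_prefix assms by blast+
  then show ?thesis by (metis nle_le take_all)
qed

lemma outcome_reached:
  assumes "valid_prof s"
  shows "outcome G s \<in> terminals G" "reaches G s (outcome G s)"
proof -
  obtain z where z: "z \<in> terminals G" "reaches G s z" using ex_reached_terminal[OF assms] by blast
  have "outcome G s = z"
    unfolding outcome_def using z reached_terminal_unique by (intro the_equality) auto
  then show "outcome G s \<in> terminals G" "reaches G s (outcome G s)" using z by simp_all
qed

lemma outcome_cong:
  assumes "valid_prof s" "valid_prof s'"
    and "\<And>k. k < length (outcome G s) \<Longrightarrow> mv G s' (take k (outcome G s)) = mv G s (take k (outcome G s))"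
  shows "outcome G s' = outcome G s"
proof -
  have "reaches G s' (outcome G s)" using reaches_cong outcome_reached(2)[OF assms(1)] assms(3) .
  then show ?thesis
    using outcome_reached[OF assms(1)] outcome_reached[OF assms(2)] reached_terminal_unique by blast
qed

subsection \<open>Information sets under perfect recall\<close>

lemma infosetsD:
  assumes "i \<in> players G" "I \<in> infosets G i" "h \<in> I"
  shows "h \<in> hists G" "i \<in> active G h" "info G i h = I"
proof -
  obtain h0 where h0: "h0 \<in> hists G" "i \<in> active G h0" "I = info G i h0"
    using assms(2) unfolding infosets_def by blast
  note props = info_props[OF player_in_allpl[OF assms(1)] h0(1,2)]
  show "h \<in> hists G" "i \<in> active G h" "info G i h = I"
    using props(2) props(3)[of h] h0(3) assms(3) by auto
qed

lemma info_in_infosets: "h \<in> hists G \<Longrightarrow> i \<in> active G h \<Longrightarrow> info G i h \<in> infosets G i"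
  unfolding infosets_def by blast

lemma take_in_info:
  "i \<in> players G \<Longrightarrow> h \<in> hists G \<Longrightarrow> i \<in> active G (take k h) \<Longrightarrow> take k h \<in> info G i (take k h)"
  using info_props(1)[OF player_in_allpl hists_take] by blast

lemma strict_prefix_conv_take: "strict_prefix a b \<longleftrightarrow> (\<exists>k < length b. a = take k b)"
proof
  assume "strict_prefix a b"
  then show "\<exists>k < length b. a = take k b"
    by (metis append_eq_conv_conj prefix_def prefix_length_less strict_prefix_def)
next
  assume "\<exists>k < length b. a = take k b"
  then obtain k where "k < length b" "a = take k b" by blast
  then show "strict_prefix a b"
    by (metis append_take_drop_id length_take less_not_refl min.absorb4 prefixI
        prefix_order.dual_order.not_eq_order_implies_strict)
qed

lemma set_exper: "set (exper G j h) =
   {(info G j (take k h), the ((h ! k) j)) | k. k < length h \<and> j \<in> active G (take k h)}"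
  unfolding exper_def by (auto split: if_splits)

lemma perfect_recall_prefix:
  assumes i: "i \<in> players G" and I: "I \<in> infosets G i" and h: "h \<in> I" and h2: "h2 \<in> I"
    and k0: "k0 < length h2" "i \<in> active G (take k0 h2)"
  shows "\<exists>k < length h. i \<in> active G (take k h) \<and> info G i (take k h) = info G i (take k0 h2)
     \<and> the ((h ! k) i) = the ((h2 ! k0) i)"
proof -
  have "exper G i h = exper G i h2"
    using perfect_recall[OF i infosetsD(1,2)[OF i I h2]] infosetsD(3)[OF i I h2] h by simp
  moreover have "(info G i (take k0 h2), the ((h2 ! k0) i)) \<in> set (exper G i h2)"
    unfolding set_exper using k0 by blast
  ultimately have "(info G i (take k0 h2), the ((h2 ! k0) i)) \<in> set (exper G i h)" by simp
  then show ?thesis unfolding set_exper by auto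
qed

text \<open>By perfect recall, a history of \<open>I\<close> with a strict prefix in \<open>I\<close> would give that prefix a
shorter strict prefix in \<open>I\<close>; induct on the length of the prefix.\<close>
lemma infoset_no_strict_prefix:
  assumes i: "i \<in> players G" and I: "I \<in> infosets G i"
  shows "h0 \<in> I \<Longrightarrow> h \<in> I \<Longrightarrow> \<not> strict_prefix h0 h"
proof (induction h0 arbitrary: h rule: length_induct)
  case (1 h0)
  show ?case
  proof
    assume "strict_prefix h0 h"
    then obtain n where n: "n < length h" "h0 = take n h" using strict_prefix_conv_take by blast
    obtain k where k: "k < length h0" "i \<in> active G (take k h0)" "info G i (take k h0) = info G i (take n h)"
      using perfect_recall_prefix[OF i I 1(2) 1(3), of n] n infosetsD[OF i I 1(2)] by auto
    have "take k h0 \<in> I"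
      using take_in_info[OF i infosetsD(1)[OF i I 1(2)] k(2)] k(3) n infosetsD(3)[OF i I 1(2)] by simp
    moreover have "strict_prefix (take k h0) h0" using k(1) strict_prefix_conv_take by blast
    ultimately show False using 1(1) k(1) 1(2) by (metis length_take min.absorb4 nat_less_le)
  qed
qed

lemma precedes_info_take:
  assumes "i \<in> players G" "I \<in> infosets G i" "h \<in> I" "k < length h" "i \<in> active G (take k h)"
  shows "precedes (info G i (take k h)) I"
proof -
  have "take k h \<in> info G i (take k h)" using take_in_info infosetsD(1) assms by blast
  moreover have "strict_prefix (take k h) h" using assms(4) strict_prefix_conv_take by blast
  ultimately show ?thesis unfolding precedes_def using assms(3) by blast
qed

lemma precedesD:
  assumes i: "i \<in> players G" and J: "J \<in> infosets G i" and I: "I \<in> infosets G i"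
    and "precedes J I" and h: "h \<in> I"
  shows "\<exists>k < length h. i \<in> active G (take k h) \<and> info G i (take k h) = J"
proof -
  obtain h1 h2 where h12: "h1 \<in> J" "h2 \<in> I" "strict_prefix h1 h2"
    using \<open>precedes J I\<close> unfolding precedes_def by blast
  obtain k0 where k0: "k0 < length h2" "h1 = take k0 h2" using h12(3) strict_prefix_conv_take by blast
  show ?thesis using perfect_recall_prefix[OF i I h h12(2) k0(1)] infosetsD[OF i J h12(1)] k0 by auto
qed

lemma opp_reaches_precedes:
  assumes i: "i \<in> players G" and I: "I \<in> infosets G i" and I': "I' \<in> infosets G i"
    and "precedes I I'" and "opp_reaches G i \<sigma> I'"
  shows "opp_reaches G i \<sigma> I"
proof -
  obtain x h where xh: "x \<in> strats G i" "h \<in> I'" "reaches G (\<sigma>(i := x)) h"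
    using \<open>opp_reaches G i \<sigma> I'\<close> unfolding opp_reaches_def reachesI_def by blast
  obtain k where k: "k < length h" "i \<in> active G (take k h)" "info G i (take k h) = I"
    using precedesD[OF i I I' \<open>precedes I I'\<close> xh(2)] by blast
  have "take k h \<in> I" using take_in_info[OF i reaches_hists[OF xh(3)] k(2)] k(3) by simp
  then show ?thesis unfolding opp_reaches_def reachesI_def using xh(1) reaches_take[OF xh(3)] by blast
qed

subsection \<open>Finiteness\<close>

lemma finite_acts:
  assumes h: "h \<in> hists G"
  shows "finite (acts G j h)"
proof (cases "j \<in> active G h")
  case False then show ?thesis by (simp add: active_def)
next
  case True
  define m where "m a = (\<lambda>j'. if j' \<in> active G h
      then Some (if j' = j then a else SOME b. b \<in> acts G j' h) else None)" for a
  have "h @ [m a] \<in> hists G" if a: "a \<in> acts G j h" for a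
  proof -
    have "moveprof G h (m a)"
      unfolding moveprof_def m_def using a by (auto simp: active_def some_in_eq)
    then show ?thesis using hists_snoc_iff[OF h] True by auto
  qed
  moreover have "inj_on (\<lambda>a. h @ [m a]) (acts G j h)"
    by (rule inj_onI) (use True in \<open>auto simp: m_def dest: fun_cong[where x = j]\<close>)
  ultimately show ?thesis
    using finite_hists by (meson finite_imageD finite_subset image_subsetI)
qed

lemma finite_strats: "finite (strats G j)"
proof -
  have "strats G j \<subseteq> PiE (hists G) (\<lambda>h. insert undefined (acts G j h))"
    unfolding strats_def by (auto simp: PiE_def Pi_def extensional_def)
  moreover have "finite (PiE (hists G) (\<lambda>h. insert undefined (acts G j h)))"
    using finite_hists finite_acts by (intro finite_PiE) auto
  ultimately show ?thesis by (rule finite_subset)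
qed

lemma finite_opps: "finite (opps G i)"
proof -
  have "opps G i \<subseteq> PiE (allpl G) (\<lambda>j. insert undefined (strats G j))"
    unfolding opps_def by (auto simp: PiE_def Pi_def extensional_def)
  moreover have "finite (PiE (allpl G) (\<lambda>j. insert undefined (strats G j)))"
    using finite_players finite_strats by (intro finite_PiE) (auto simp: allpl_def)
  ultimately show ?thesis by (rule finite_subset)
qed

lemma finite_infosets: "finite (infosets G i)"
proof -
  have "infosets G i = info G i ` {h \<in> hists G. i \<in> active G h}" unfolding infosets_def by blast
  then show ?thesis using finite_hists by simp
qed

lemma some_act_strats:
  "(\<lambda>h. if h \<in> hists G \<and> j \<in> active G h then SOME a. a \<in> acts G j h else undefined) \<in> strats G j"
    (is "?s \<in> _")
proof -
  have "?s h \<in> acts G j h \<and> (\<forall>h'\<in>info G j h. ?s h' = ?s h)"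
    if h: "h \<in> hists G" and a: "j \<in> active G h" for h
  proof -
    have "j \<in> allpl G" using active_subset_allpl h a by blast
    note props = info_props[OF this h a]
    have "?s h' = ?s h" if "h' \<in> info G j h" for h'
      using props(2) props(3)[OF that] that h a by auto
    moreover have "?s h \<in> acts G j h" using h a by (simp add: active_def some_in_eq)
    ultimately show ?thesis by blast
  qed
  then show ?thesis unfolding strats_def by auto
qed

lemma strats_nonempty: "strats G j \<noteq> {}"
  using some_act_strats by blast

subsection \<open>Changing one's own strategy\<close>

definition initial_infoset :: "'i \<Rightarrow> ('i,'a) hist set \<Rightarrow> bool" where
  "initial_infoset i I \<longleftrightarrow> I \<in> infosets G i \<and> (\<forall>J\<in>infosets G i. \<not> precedes J I)"

lemma reaches_replacement:
  assumes i: "i \<in> players G" and I: "I \<in> infosets G i" and s: "s \<in> strats G i"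
    and h: "h \<in> I" and r: "reaches G (\<sigma>(i := x)) h" and sr: "strat_reaches G i s I"
    and y: "\<forall>J\<in>infosets G i. precedes J I \<longrightarrow> (\<forall>h'\<in>J. y h' = s h')"
  shows "reaches G (\<sigma>(i := y)) h"
proof (rule reaches_cong[OF r], rule mv_upd_cong)
  fix k assume k: "k < length h" and a: "i \<in> active G (take k h)"
  obtain \<sigma>0 h0 where h0: "h0 \<in> I" "reaches G (\<sigma>0(i := s)) h0"
    using sr unfolding strat_reaches_def reachesI_def by blast
  define J where "J = info G i (take k h)"
  have J: "J \<in> infosets G i" and tJ: "take k h \<in> J"
    unfolding J_def using info_in_infosets take_in_info[OF i] hists_take reaches_hists[OF r] a by auto
  have pJ: "precedes J I" unfolding J_def using precedes_info_take[OF i I h k a] .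
  \<comment> \<open>by perfect recall, \<open>s\<close> has already made the move \<open>x\<close> makes at \<open>J\<close> on its way to \<open>I\<close>\<close>
  obtain k' where k': "k' < length h0" "i \<in> active G (take k' h0)" "info G i (take k' h0) = J"
    "the ((h0 ! k') i) = the ((h ! k) i)"
    using perfect_recall_prefix[OF i I h0(1) h k a] unfolding J_def by blast
  have "the ((h ! k) i) = x (take k h)" using reaches_move[OF r k a] by simp
  moreover have "the ((h0 ! k') i) = s (take k' h0)" using reaches_move[OF h0(2) k'(1,2)] by simp
  moreover have "s (take k h) = s (take k' h0)"
    using strats_const_on_info[OF s hists_take[OF reaches_hists[OF h0(2)]] k'(2)] tJ k'(3) by simp
  moreover have "y (take k h) = s (take k h)" using y J pJ tJ by blast
  ultimately show "y (take k h) = x (take k h)" using k'(4) by simp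
qed

lemma reaches_initial_upd:
  assumes i: "i \<in> players G" and I: "initial_infoset i I" and h: "h \<in> I"
    and r: "reaches G (\<sigma>(i := x)) h"
  shows "reaches G (\<sigma>(i := y)) h"
proof (rule reaches_cong[OF r], rule mv_upd_cong)
  fix k assume k: "k < length h" and a: "i \<in> active G (take k h)"
  have "info G i (take k h) \<in> infosets G i"
    using info_in_infosets hists_take[OF reaches_hists[OF r]] a by blast
  moreover have "precedes (info G i (take k h)) I"
    using precedes_info_take[OF i _ h k a] I initial_infoset_def by blast
  ultimately show "y (take k h) = x (take k h)" using I initial_infoset_def by blast
qed

lemma opp_reaches_initial_upd:
  assumes "i \<in> players G" "initial_infoset i I" "opp_reaches G i \<sigma> I"
  shows "reachesI G (\<sigma>(i := y)) I"
  using assms reaches_initial_upd unfolding opp_reaches_def reachesI_def by blast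

lemma initial_infoset_unique:
  assumes i: "i \<in> players G" and I: "initial_infoset i I" and I': "initial_infoset i I'"
    and h: "h \<in> I" and h': "h' \<in> I'"
    and r: "reaches G (\<sigma>(i := x)) h" and r': "reaches G (\<sigma>(i := y)) h'"
  shows "I = I'"
proof -
  have r2: "reaches G (\<sigma>(i := x)) h'" using reaches_initial_upd[OF i I' h' r'] .
  have "\<not> strict_prefix h h'" "\<not> strict_prefix h' h"
    using I I' h h' unfolding initial_infoset_def precedes_def by blast+
  then have "h = h'"
    using reaches_prefix[OF r r2] reaches_prefix[OF r2 r]
    by (metis nle_le strict_prefix_conv_take take_all_iff order.not_eq_order_implies_strict)
  then show ?thesis
    using infosetsD(3)[OF i _ h] infosetsD(3)[OF i _ h'] I I' initial_infoset_def by metis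
qed

lemma ex_initial_infoset_reached:
  assumes i: "i \<in> players G" and r: "reaches G s h" and a: "i \<in> active G h"
  shows "\<exists>I. initial_infoset i I \<and> (\<exists>h'\<in>I. reaches G s h')"
proof -
  have hh: "h \<in> hists G" using reaches_hists[OF r] .
  define n where "n = (LEAST n. i \<in> active G (take n h))"
  have an: "i \<in> active G (take n h)" unfolding n_def by (rule LeastI[of _ "length h"]) (simp add: a)
  have nmin: "\<And>m. i \<in> active G (take m h) \<Longrightarrow> n \<le> m" unfolding n_def by (rule Least_le)
  define J where "J = info G i (take n h)"
  have J: "J \<in> infosets G i" unfolding J_def using info_in_infosets hists_take[OF hh] an by blast
  have tJ: "take n h \<in> J" unfolding J_def using take_in_info[OF i hh an] .
  have "initial_infoset i J" unfolding initial_infoset_def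
  proof (intro conjI ballI notI)
    fix K assume K: "K \<in> infosets G i" and "precedes K J"
    then obtain k where "k < length (take n h)" "i \<in> active G (take k (take n h))"
      using precedesD[OF i K J _ tJ] by blast
    then show False using nmin[of k] by (simp add: min_def split: if_splits)
  qed (rule J)
  then show ?thesis using tJ reaches_take[OF r] by blast
qed

lemma opps_reaching_initial:
  assumes "i \<in> players G" "I \<in> infosets G i" "opp_reaches G i \<sigma> I" "\<sigma> \<in> opps G i"
  shows "\<exists>I0. initial_infoset i I0 \<and> \<sigma> \<in> oppsI G i I0"
proof -
  obtain x h where xh: "x \<in> strats G i" "h \<in> I" "reaches G (\<sigma>(i := x)) h"
    using assms(3) unfolding opp_reaches_def reachesI_def by blast
  obtain I0 h' where "initial_infoset i I0" "h' \<in> I0" "reaches G (\<sigma>(i := x)) h'"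
    using ex_initial_infoset_reached[OF assms(1) xh(3) infosetsD(2)[OF assms(1,2) xh(2)]] by blast
  then show ?thesis unfolding oppsI_def opp_reaches_def reachesI_def using assms(4) xh(1) by blast
qed

lemma oppsI_subset_opps: "oppsI G i I \<subseteq> opps G i"
  unfolding oppsI_def by blast

lemma oppsI_initial_disjoint:
  assumes "i \<in> players G" "initial_infoset i I" "initial_infoset i I'" "I \<noteq> I'"
  shows "oppsI G i I \<inter> oppsI G i I' = {}"
  using assms initial_infoset_unique unfolding oppsI_def opp_reaches_def reachesI_def by blast

lemma outcome_upd_unreached:
  assumes \<sigma>: "\<sigma> \<in> opps G i" and x: "x \<in> strats G i" and y: "y \<in> strats G i"
    and i: "i \<in> players G" and nr: "\<forall>I\<in>infosets G i. \<not> reachesI G (\<sigma>(i := x)) I"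
  shows "outcome G (\<sigma>(i := y)) = outcome G (\<sigma>(i := x))"
proof (rule outcome_cong[OF valid_prof_upd[OF \<sigma> x] valid_prof_upd[OF \<sigma> y]], rule mv_upd_cong)
  let ?z = "outcome G (\<sigma>(i := x))"
  have rz: "reaches G (\<sigma>(i := x)) ?z" using outcome_reached(2)[OF valid_prof_upd[OF \<sigma> x]] .
  fix k assume k: "k < length ?z" and a: "i \<in> active G (take k ?z)"
  have "info G i (take k ?z) \<in> infosets G i"
    using info_in_infosets hists_take[OF reaches_hists[OF rz]] a by blast
  moreover have "reachesI G (\<sigma>(i := x)) (info G i (take k ?z))"
    unfolding reachesI_def using take_in_info[OF i reaches_hists[OF rz] a] reaches_take[OF rz] by blast
  ultimately show "y (take k ?z) = x (take k ?z)" using nr by blast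
qed

subsection \<open>Expected payoffs\<close>

abbreviation payoff :: "'i \<Rightarrow> ('i,'a) prof \<Rightarrow> ('i,'a) strat \<Rightarrow> real" where
  "payoff i \<sigma> x \<equiv> pay G i (outcome G (\<sigma>(i := x)))"

lemma EU_eq_sum: "finite A \<Longrightarrow> set_pmf p \<subseteq> A \<Longrightarrow> EU G i p x = (\<Sum>\<sigma>\<in>A. pmf p \<sigma> * payoff i \<sigma> x)"
  unfolding EU_def by (subst integral_measure_pmf[of A]) auto

lemma EU_gain_eq_sum:
  "finite A \<Longrightarrow> set_pmf p \<subseteq> A \<Longrightarrow>
   EU G i p y - EU G i p x = (\<Sum>\<sigma>\<in>A. pmf p \<sigma> * (payoff i \<sigma> y - payoff i \<sigma> x))"
  by (simp add: EU_eq_sum sum_subtractf right_diff_distrib)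

lemma sum_gain_eq_cond_gain:
  assumes A: "finite A" "set_pmf p \<subseteq> A" and B: "set_pmf p \<inter> B \<noteq> {}"
  shows "(\<Sum>\<sigma>\<in>A \<inter> B. pmf p \<sigma> * (payoff i \<sigma> y - payoff i \<sigma> x)) =
     measure_pmf.prob p B * (EU G i (cond_pmf p B) y - EU G i (cond_pmf p B) x)"
proof -
  let ?g = "\<lambda>\<sigma>. pmf p \<sigma> * (payoff i \<sigma> y - payoff i \<sigma> x)"
  have PB: "measure_pmf.prob p B > 0" using B by (auto intro: measure_pmf_posI)
  have "EU G i (cond_pmf p B) y - EU G i (cond_pmf p B) x =
      (\<Sum>\<sigma>\<in>A. pmf (cond_pmf p B) \<sigma> * (payoff i \<sigma> y - payoff i \<sigma> x))"
    using A B by (intro EU_gain_eq_sum) auto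
  also have "\<dots> = (\<Sum>\<sigma>\<in>A. if \<sigma> \<in> B then ?g \<sigma> / measure_pmf.prob p B else 0)"
    by (intro sum.cong refl) (simp add: pmf_cond[OF B])
  also have "\<dots> = (\<Sum>\<sigma>\<in>A \<inter> B. ?g \<sigma>) / measure_pmf.prob p B"
    using A(1) by (simp add: sum.If_cases Int_commute sum_divide_distrib)
  finally show ?thesis using PB by simp
qed

text \<open>The strategy \<open>splice_at I s' s\<close> follows \<open>s'\<close> from \<open>I\<close> on and \<open>s\<close> elsewhere. Against opponents
reaching \<open>I\<close> it earns what the \<open>I\<close>-replacement \<open>s'\<close> earns, against all others what \<open>s\<close> earns; so
its ex-ante gain over \<open>s\<close> is the conditional gain of \<open>s'\<close> at \<open>I\<close>, weighted by the probability of
reaching \<open>I\<close>.\<close>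
definition splice_at :: "('i,'a) hist set \<Rightarrow> ('i,'a) strat \<Rightarrow> ('i,'a) strat \<Rightarrow> ('i,'a) strat" where
  "splice_at I s' s h = (if \<exists>h0\<in>I. prefix h0 h then s' h else s h)"

lemma info_prefix_infoset:
  assumes i: "i \<in> players G" and I: "I \<in> infosets G i" and h: "h \<in> hists G" "i \<in> active G h"
    and h': "h' \<in> info G i h" and h0: "h0 \<in> I" "prefix h0 h"
  shows "\<exists>h1\<in>I. prefix h1 h'"
proof (cases "h0 = h")
  case True
  then have "info G i h = I" using infosetsD(3)[OF i I h0(1)] by simp
  then show ?thesis using h' by blast
next
  case False
  then have sp: "strict_prefix h0 h" using h0(2) by (simp add: strict_prefix_def)
  have hJ: "h \<in> info G i h" using info_props(1)[OF player_in_allpl[OF i] h] .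
  have "precedes I (info G i h)" unfolding precedes_def using h0(1) hJ sp by blast
  then obtain k where k: "k < length h'" "i \<in> active G (take k h')" "info G i (take k h') = I"
    using precedesD[OF i I info_in_infosets[OF h] _ h'] by blast
  have "h' \<in> hists G" using info_props(2)[OF player_in_allpl[OF i] h] h' by blast
  then have "take k h' \<in> I" using take_in_info[OF i _ k(2)] k(3) by simp
  then show ?thesis using take_is_prefix by blast
qed

lemma splice_at_strats:
  assumes i: "i \<in> players G" and I: "I \<in> infosets G i" and s: "s \<in> strats G i"
    and s': "s' \<in> strats G i"
  shows "splice_at I s' s \<in> strats G i"
proof -
  have "splice_at I s' s h \<in> acts G i h \<and> (\<forall>h'\<in>info G i h. splice_at I s' s h' = splice_at I s' s h)"
    if h: "h \<in> hists G" "i \<in> active G h" for h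
  proof (intro conjI ballI)
    show "splice_at I s' s h \<in> acts G i h"
      using strats_act[OF s h] strats_act[OF s' h] by (simp add: splice_at_def)
    fix h' assume h': "h' \<in> info G i h"
    have P: "h' \<in> hists G" "i \<in> active G h'" "info G i h' = info G i h"
      using info_props(2)[OF player_in_allpl[OF i] h] info_props(3)[OF player_in_allpl[OF i] h h'] h'
      by blast+
    have "h \<in> info G i h'" using P(3) info_props(1)[OF player_in_allpl[OF i] h] by simp
    then have "(\<exists>h0\<in>I. prefix h0 h') = (\<exists>h0\<in>I. prefix h0 h)"
      using info_prefix_infoset[OF i I h h'] info_prefix_infoset[OF i I P(1,2)] by blast
    then show "splice_at I s' s h' = splice_at I s' s h"
      unfolding splice_at_def using strats_const_on_info[OF s h h'] strats_const_on_info[OF s' h h'] by simp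
  qed
  moreover have "splice_at I s' s h = undefined" if "\<not> (h \<in> hists G \<and> i \<in> active G h)" for h
    using that s s' unfolding strats_def splice_at_def by simp
  ultimately show ?thesis unfolding strats_def by blast
qed

lemma payoff_splice_at_unreached:
  assumes i: "i \<in> players G" and \<sigma>: "\<sigma> \<in> opps G i" and s: "s \<in> strats G i"
    and s': "s' \<in> strats G i" and I: "I \<in> infosets G i" and nr: "\<not> opp_reaches G i \<sigma> I"
  shows "payoff i \<sigma> (splice_at I s' s) = payoff i \<sigma> s"
proof -
  let ?z = "outcome G (\<sigma>(i := s))"
  have rz: "reaches G (\<sigma>(i := s)) ?z" using outcome_reached(2)[OF valid_prof_upd[OF \<sigma> s]] .
  have "splice_at I s' s (take k ?z) = s (take k ?z)" for k
  proof -
    have "\<not> prefix h0 (take k ?z)" if "h0 \<in> I" for h0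
    proof
      assume "prefix h0 (take k ?z)"
      then have "h0 = take (length h0) (take k ?z)" by (metis append_eq_conv_conj prefix_def)
      then have "reaches G (\<sigma>(i := s)) h0" using reaches_take[OF reaches_take[OF rz]] by metis
      then show False using nr s that unfolding opp_reaches_def reachesI_def by blast
    qed
    then show ?thesis by (auto simp: splice_at_def)
  qed
  then have "outcome G (\<sigma>(i := splice_at I s' s)) = ?z"
    by (intro outcome_cong valid_prof_upd[OF \<sigma>] s splice_at_strats[OF i I s s'] mv_upd_cong)
  then show ?thesis by simp
qed

lemma infoset_no_prefix_before:
  assumes "i \<in> players G" "I \<in> infosets G i" "h \<in> I" "k < length h"
  shows "\<not> (\<exists>h0\<in>I. prefix h0 (take k h))"
proof
  assume "\<exists>h0\<in>I. prefix h0 (take k h)"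
  then obtain h0 where "h0 \<in> I" "prefix h0 (take k h)" by blast
  moreover have "strict_prefix (take k h) h" using assms(4) strict_prefix_conv_take by blast
  ultimately show False
    using infoset_no_strict_prefix[OF assms(1,2) _ assms(3)] prefix_order.le_less_trans by blast
qed

lemma replacement_before:
  assumes i: "i \<in> players G" and I: "I \<in> infosets G i" and rep: "replacement G i I s' s"
    and h: "h \<in> I" and k: "k < length h" and a: "i \<in> active G (take k h)"
  shows "s' (take k h) = s (take k h)"
proof -
  have hh: "h \<in> hists G" using infosetsD(1)[OF i I h] .
  have "precedes (info G i (take k h)) I" using precedes_info_take[OF i I h k a] .
  moreover have "info G i (take k h) \<in> infosets G i" using info_in_infosets hists_take[OF hh] a by blast
  moreover have "take k h \<in> info G i (take k h)" using take_in_info[OF i hh a] .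
  ultimately show ?thesis using rep unfolding replacement_def by blast
qed

lemma payoff_splice_at_reached:
  assumes i: "i \<in> players G" and \<sigma>: "\<sigma> \<in> opps G i" and s: "s \<in> strats G i"
    and I: "I \<in> infosets G i" and r: "opp_reaches G i \<sigma> I"
    and sr: "strat_reaches G i s I" and rep: "replacement G i I s' s"
  shows "payoff i \<sigma> (splice_at I s' s) = payoff i \<sigma> s'"
proof -
  have s': "s' \<in> strats G i" and y: "\<forall>J\<in>infosets G i. precedes J I \<longrightarrow> (\<forall>h'\<in>J. s' h' = s h')"
    using rep unfolding replacement_def by blast+
  obtain x h where xh: "x \<in> strats G i" "h \<in> I" "reaches G (\<sigma>(i := x)) h"
    using r unfolding opp_reaches_def reachesI_def by blast
  have rh: "reaches G (\<sigma>(i := s')) h" using reaches_replacement[OF i I s xh(2,3) sr y] .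
  let ?z = "outcome G (\<sigma>(i := s'))"
  have hz: "h = take (length h) ?z"
    using reaches_terminal_prefix[OF rh] outcome_reached[OF valid_prof_upd[OF \<sigma> s']] by blast
  have "splice_at I s' s (take k ?z) = s' (take k ?z)" if a: "i \<in> active G (take k ?z)" for k
  proof (cases "length h \<le> k")
    case True
    then have "h = take (length h) (take k ?z)" using hz by (simp add: min_def)
    then have "prefix h (take k ?z)" by (metis take_is_prefix)
    then show ?thesis using xh(2) unfolding splice_at_def by auto
  next
    case False
    have "take k h = take k (take (length h) ?z)" using hz by simp
    then have tk: "take k ?z = take k h" using False by (simp add: min_def)
    have kh: "k < length h" using False by simp
    have "s' (take k h) = s (take k h)"
      using replacement_before[OF i I rep xh(2) kh] a tk by simp
    then show ?thesis
      using tk infoset_no_prefix_before[OF i I xh(2) kh] by (simp add: splice_at_def)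
  qed
  then have "outcome G (\<sigma>(i := splice_at I s' s)) = ?z"
    by (intro outcome_cong valid_prof_upd[OF \<sigma>] s' splice_at_strats[OF i I s s'] mv_upd_cong)
  then show ?thesis by simp
qed

lemma EU_splice_at_gain:
  assumes i: "i \<in> players G" and p: "set_pmf p \<subseteq> opps G i"
    and I: "I \<in> infosets G i" and s: "s \<in> strats G i" and sr: "strat_reaches G i s I"
    and rep: "replacement G i I s' s"
  shows "EU G i p (splice_at I s' s) - EU G i p s =
    (\<Sum>\<sigma>\<in>opps G i \<inter> oppsI G i I. pmf p \<sigma> * (payoff i \<sigma> s' - payoff i \<sigma> s))"
proof -
  have s': "s' \<in> strats G i" using rep unfolding replacement_def by blast
  let ?f = "\<lambda>\<sigma>. pmf p \<sigma> * (payoff i \<sigma> (splice_at I s' s) - payoff i \<sigma> s)"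
  have "EU G i p (splice_at I s' s) - EU G i p s = (\<Sum>\<sigma>\<in>opps G i. ?f \<sigma>)"
    using EU_gain_eq_sum[OF finite_opps p] .
  also have "\<dots> = (\<Sum>\<sigma>\<in>opps G i \<inter> oppsI G i I. ?f \<sigma>) + (\<Sum>\<sigma>\<in>opps G i - oppsI G i I. ?f \<sigma>)"
    using finite_opps by (rule sum.Int_Diff)
  also have "(\<Sum>\<sigma>\<in>opps G i - oppsI G i I. ?f \<sigma>) = 0"
    using payoff_splice_at_unreached[OF i _ s s' I] by (intro sum.neutral) (auto simp: oppsI_def)
  also have "(\<Sum>\<sigma>\<in>opps G i \<inter> oppsI G i I. ?f \<sigma>) =
      (\<Sum>\<sigma>\<in>opps G i \<inter> oppsI G i I. pmf p \<sigma> * (payoff i \<sigma> s' - payoff i \<sigma> s))"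
    using payoff_splice_at_reached[OF i _ s I _ sr rep] by (intro sum.cong) (auto simp: oppsI_def)
  finally show ?thesis by simp
qed

subsection \<open>Lexicographic best replies\<close>

fun lex_best_replies :: "'i \<Rightarrow> ('i,'a) prof pmf list \<Rightarrow> ('i,'a) strat set \<Rightarrow> ('i,'a) strat set" where
  "lex_best_replies i [] S = S"
| "lex_best_replies i (p # ps) S = lex_best_replies i ps {x\<in>S. \<forall>y\<in>S. EU G i p y \<le> EU G i p x}"

lemma lex_best_replies_subset: "lex_best_replies i ps S \<subseteq> S"
  by (induction ps arbitrary: S) auto

lemma lex_best_replies_nonempty: "finite S \<Longrightarrow> S \<noteq> {} \<Longrightarrow> lex_best_replies i ps S \<noteq> {}"
proof (induction ps arbitrary: S)
  case (Cons p ps)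
  have "Max (EU G i p ` S) \<in> EU G i p ` S" using Cons.prems by (intro Max_in) auto
  then obtain x where "x \<in> S" "EU G i p x = Max (EU G i p ` S)" by auto
  then have "x \<in> {x\<in>S. \<forall>y\<in>S. EU G i p y \<le> EU G i p x}" using Cons.prems by simp
  then show ?case using Cons.IH[of "{x\<in>S. \<forall>y\<in>S. EU G i p y \<le> EU G i p x}"] Cons.prems(1)
    by (metis (no_types, lifting) empty_iff finite_subset lex_best_replies.simps(2) mem_Collect_eq subsetI)
qed simp

lemma lex_best_replies_optimal:
  assumes "s \<in> lex_best_replies i ps S" "y \<in> S" "t < length ps"
    and "\<forall>t'<t. EU G i (ps ! t') y = EU G i (ps ! t') s"
  shows "EU G i (ps ! t) y \<le> EU G i (ps ! t) s"
  using assms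
proof (induction ps arbitrary: S t)
  case (Cons p ps)
  let ?S = "{x\<in>S. \<forall>y\<in>S. EU G i p y \<le> EU G i p x}"
  have sS: "s \<in> ?S" using Cons.prems(1) lex_best_replies_subset by fastforce
  show ?case
  proof (cases t)
    case 0 then show ?thesis using sS Cons.prems(2) by simp
  next
    case (Suc t')
    have "EU G i p y = EU G i p s" using Cons.prems(4) Suc by force
    then have "y \<in> ?S" using sS Cons.prems(2) by auto
    then show ?thesis using Cons.IH[of ?S t'] Cons.prems Suc by force
  qed
qed simp

text \<open>A lexicographic best reply is rational at \<open>I\<close> for the conditional of the first prior that
reaches \<open>I\<close>: otherwise splicing in a better \<open>I\<close>-replacement would raise the expected payoff under
that prior and leave it unchanged under all earlier ones.\<close>
lemma lex_best_replies_rational_at: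
  assumes i: "i \<in> players G" and ps: "\<forall>p\<in>set ps. set_pmf p \<subseteq> opps G i"
    and s: "s \<in> lex_best_replies i ps (strats G i)" and I: "I \<in> infosets G i"
    and sr: "strat_reaches G i s I" and t: "t < length ps"
    and before: "\<forall>t'<t. set_pmf (ps ! t') \<inter> oppsI G i I = {}"
    and reach: "set_pmf (ps ! t) \<inter> oppsI G i I \<noteq> {}"
    and rep: "replacement G i I s' s"
  shows "EU G i (cond_pmf (ps ! t) (oppsI G i I)) s' \<le> EU G i (cond_pmf (ps ! t) (oppsI G i I)) s"
proof -
  have sS: "s \<in> strats G i" using s lex_best_replies_subset by blast
  have s': "s' \<in> strats G i" using rep unfolding replacement_def by blast
  let ?y = "splice_at I s' s"
  have gain: "EU G i (ps ! t') ?y - EU G i (ps ! t') s =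
      (\<Sum>\<sigma>\<in>opps G i \<inter> oppsI G i I. pmf (ps ! t') \<sigma> * (payoff i \<sigma> s' - payoff i \<sigma> s))"
    if "t' < length ps" for t'
    using EU_splice_at_gain[OF i _ I sS sr rep] ps that by simp
  have "EU G i (ps ! t') ?y = EU G i (ps ! t') s" if "t' < t" for t'
  proof -
    have "(\<Sum>\<sigma>\<in>opps G i \<inter> oppsI G i I. pmf (ps ! t') \<sigma> * (payoff i \<sigma> s' - payoff i \<sigma> s)) = 0"
      using before that by (intro sum.neutral) (auto simp: set_pmf_eq)
    then show ?thesis using gain[of t'] that t by simp
  qed
  then have "EU G i (ps ! t) ?y \<le> EU G i (ps ! t) s"
    using lex_best_replies_optimal[OF s splice_at_strats[OF i I sS s'] t] by blast
  moreover have "EU G i (ps ! t) ?y - EU G i (ps ! t) s = measure_pmf.prob (ps ! t) (oppsI G i I) *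
      (EU G i (cond_pmf (ps ! t) (oppsI G i I)) s' - EU G i (cond_pmf (ps ! t) (oppsI G i I)) s)"
    using gain[OF t] sum_gain_eq_cond_gain[OF finite_opps _ reach] ps t by simp
  ultimately have "measure_pmf.prob (ps ! t) (oppsI G i I) *
      (EU G i (cond_pmf (ps ! t) (oppsI G i I)) s' - EU G i (cond_pmf (ps ! t) (oppsI G i I)) s) \<le> 0"
    by simp
  moreover have "measure_pmf.prob (ps ! t) (oppsI G i I) > 0"
    using reach by (auto intro: measure_pmf_posI)
  ultimately show ?thesis by (auto simp: mult_le_0_iff)
qed

lemma lex_best_replies_rational_all:
  assumes i: "i \<in> players G" and ps: "\<forall>p\<in>set ps. set_pmf p \<subseteq> opps G i"
    and s: "s \<in> lex_best_replies i ps (strats G i)"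
    and first: "\<And>I. I \<in> infosets G i \<Longrightarrow> oppsI G i I \<noteq> {} \<Longrightarrow> \<exists>t<length ps.
        (\<forall>t'<t. set_pmf (ps ! t') \<inter> oppsI G i I = {}) \<and> set_pmf (ps ! t) \<inter> oppsI G i I \<noteq> {} \<and>
        \<beta> I = cond_pmf (ps ! t) (oppsI G i I)"
  shows "rational_all G i \<beta> s"
proof -
  have sS: "s \<in> strats G i" using s lex_best_replies_subset by blast
  have "rational_at G i \<beta> s I" if I: "I \<in> infosets G i" for I
  proof (cases "strat_reaches G i s I")
    case True
    then have "oppsI G i I \<noteq> {}" using sS unfolding strat_reaches_def oppsI_def opp_reaches_def by blast
    then obtain t where "t < length ps" "\<forall>t'<t. set_pmf (ps ! t') \<inter> oppsI G i I = {}"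
      "set_pmf (ps ! t) \<inter> oppsI G i I \<noteq> {}" "\<beta> I = cond_pmf (ps ! t) (oppsI G i I)"
      using first[OF I] by blast
    then show ?thesis
      using lex_best_replies_rational_at[OF i ps s I True] unfolding rational_at_def by auto
  qed (simp add: rational_at_def)
  then show ?thesis using sS unfolding rational_all_def by blast
qed

subsection \<open>Sequential rationality and best replies\<close>

lemma rational_initial_optimal:
  assumes i: "i \<in> players G" and ra: "rational_all G i \<beta> s" and I: "initial_infoset i I"
    and \<sigma>: "\<sigma> \<in> opps G i" "opp_reaches G i \<sigma> I" and s': "s' \<in> strats G i"
  shows "EU G i (\<beta> I) s' \<le> EU G i (\<beta> I) s"
proof -
  have "strat_reaches G i s I"
    using opp_reaches_initial_upd[OF i I \<sigma>(2)] \<sigma>(1) unfolding strat_reaches_def by blast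
  moreover have "replacement G i I s' s" using I s' unfolding replacement_def initial_infoset_def by blast
  moreover have "rational_at G i \<beta> s I"
    using ra I unfolding rational_all_def initial_infoset_def by blast
  ultimately show ?thesis by (simp add: rational_at_def)
qed

text \<open>Opponent profiles reaching some information set of \<open>i\<close> are partitioned by the initial
information set they reach.\<close>
lemma sum_opps_initial_infosets:
  assumes i: "i \<in> players G"
    and unreached: "\<And>\<sigma>. \<sigma> \<in> opps G i \<Longrightarrow> \<forall>I\<in>infosets G i. \<not> opp_reaches G i \<sigma> I \<Longrightarrow> f \<sigma> = 0"
  shows "(\<Sum>\<sigma>\<in>opps G i. f \<sigma>) = (\<Sum>I | initial_infoset i I. \<Sum>\<sigma>\<in>oppsI G i I. f \<sigma>)"
proof -
  let ?Ini = "{I. initial_infoset i I}"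
  let ?U = "\<Union>I\<in>?Ini. oppsI G i I"
  have U: "?U \<subseteq> opps G i" using oppsI_subset_opps by blast
  have finIni: "finite ?Ini"
    using finite_infosets[of i] by (rule finite_subset[rotated]) (auto simp: initial_infoset_def)
  have "(\<Sum>\<sigma>\<in>opps G i. f \<sigma>) = (\<Sum>\<sigma>\<in>opps G i - ?U. f \<sigma>) + (\<Sum>\<sigma>\<in>?U. f \<sigma>)"
    using sum.subset_diff[OF U finite_opps] .
  also have "(\<Sum>\<sigma>\<in>opps G i - ?U. f \<sigma>) = 0"
  proof (rule sum.neutral, rule ballI)
    fix \<sigma> assume "\<sigma> \<in> opps G i - ?U"
    then show "f \<sigma> = 0" using unreached opps_reaching_initial[OF i] by blast
  qed
  also have "(\<Sum>\<sigma>\<in>?U. f \<sigma>) = (\<Sum>I\<in>?Ini. \<Sum>\<sigma>\<in>oppsI G i I. f \<sigma>)"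
  proof (rule sum.UNION_disjoint[OF finIni])
    show "\<forall>I\<in>?Ini. finite (oppsI G i I)" using finite_subset[OF oppsI_subset_opps finite_opps] by blast
    show "\<forall>I\<in>?Ini. \<forall>J\<in>?Ini. I \<noteq> J \<longrightarrow> oppsI G i I \<inter> oppsI G i J = {}"
      using oppsI_initial_disjoint[OF i] by blast
  qed
  finally show ?thesis by simp
qed

lemma rational_initial_gain_nonpos:
  assumes i: "i \<in> players G" and ra: "rational_all G i \<beta> s" and p: "set_pmf p \<subseteq> opps G i"
    and I: "initial_infoset i I" and cond: "set_pmf p \<inter> oppsI G i I \<noteq> {} \<Longrightarrow> \<beta> I = cond_pmf p (oppsI G i I)"
    and s': "s' \<in> strats G i"
  shows "(\<Sum>\<sigma>\<in>oppsI G i I. pmf p \<sigma> * (payoff i \<sigma> s' - payoff i \<sigma> s)) \<le> 0"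
proof (cases "set_pmf p \<inter> oppsI G i I = {}")
  case True
  then have "(\<Sum>\<sigma>\<in>oppsI G i I. pmf p \<sigma> * (payoff i \<sigma> s' - payoff i \<sigma> s)) = 0"
    by (intro sum.neutral) (auto simp: set_pmf_eq)
  then show ?thesis by simp
next
  case False
  then obtain \<sigma> where \<sigma>: "\<sigma> \<in> oppsI G i I" by blast
  have "(\<Sum>\<sigma>\<in>oppsI G i I. pmf p \<sigma> * (payoff i \<sigma> s' - payoff i \<sigma> s)) =
      measure_pmf.prob p (oppsI G i I) * (EU G i (\<beta> I) s' - EU G i (\<beta> I) s)"
    using sum_gain_eq_cond_gain[OF finite_opps p False] cond False
    by (simp add: Int_absorb1 oppsI_def)
  moreover have "EU G i (\<beta> I) s' \<le> EU G i (\<beta> I) s"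
    using rational_initial_optimal[OF i ra I _ _ s'] \<sigma> unfolding oppsI_def by blast
  ultimately show ?thesis by (simp add: mult_nonneg_nonpos)
qed

lemma rational_best_reply_prior:
  assumes i: "i \<in> players G" and ra: "rational_all G i \<beta> s" and p: "set_pmf p \<subseteq> opps G i"
    and cond: "\<And>I. initial_infoset i I \<Longrightarrow> set_pmf p \<inter> oppsI G i I \<noteq> {} \<Longrightarrow>
      \<beta> I = cond_pmf p (oppsI G i I)"
  shows "best_reply G i p s"
proof -
  have s: "s \<in> strats G i" using ra unfolding rational_all_def by blast
  have "EU G i p s' - EU G i p s \<le> 0" if s': "s' \<in> strats G i" for s'
  proof -
    let ?f = "\<lambda>\<sigma>. pmf p \<sigma> * (payoff i \<sigma> s' - payoff i \<sigma> s)"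
    have "EU G i p s' - EU G i p s = (\<Sum>\<sigma>\<in>opps G i. ?f \<sigma>)"
      using EU_gain_eq_sum[OF finite_opps p] .
    also have "\<dots> = (\<Sum>I | initial_infoset i I. \<Sum>\<sigma>\<in>oppsI G i I. ?f \<sigma>)"
    proof (rule sum_opps_initial_infosets[OF i])
      fix \<sigma> assume \<sigma>: "\<sigma> \<in> opps G i" and "\<forall>I\<in>infosets G i. \<not> opp_reaches G i \<sigma> I"
      then have "\<forall>I\<in>infosets G i. \<not> reachesI G (\<sigma>(i := s)) I" using s unfolding opp_reaches_def by blast
      then show "?f \<sigma> = 0" using outcome_upd_unreached[OF \<sigma> s s' i] by simp
    qed
    also have "\<dots> \<le> 0"
    proof (rule sum_nonpos)
      fix I assume "I \<in> {I. initial_infoset i I}"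
      then have I: "initial_infoset i I" by simp
      show "(\<Sum>\<sigma>\<in>oppsI G i I. ?f \<sigma>) \<le> 0" by (rule rational_initial_gain_nonpos[OF i ra p I cond[OF I] s'])
    qed
    finally show ?thesis .
  qed
  then show ?thesis using s unfolding best_reply_def by auto
qed

lemma best_reply_unreaching:
  assumes i: "i \<in> players G" and \<sigma>: "\<sigma> \<in> opps G i" and s: "s \<in> strats G i"
    and nr: "\<forall>I\<in>infosets G i. \<not> opp_reaches G i \<sigma> I"
  shows "best_reply G i (return_pmf \<sigma>) s"
proof -
  have "\<forall>I\<in>infosets G i. \<not> reachesI G (\<sigma>(i := s)) I" using nr s unfolding opp_reaches_def by blast
  then have "EU G i (return_pmf \<sigma>) s' \<le> EU G i (return_pmf \<sigma>) s" if "s' \<in> strats G i" for s'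
    using outcome_upd_unreached[OF \<sigma> s that i] by (simp add: EU_def)
  then show ?thesis using s unfolding best_reply_def by blast
qed

lemma best_reply_mixture_initial:
  assumes i: "i \<in> players G" and ra: "rational_all G i \<beta> s"
    and M: "finite M" "M \<noteq> {}" "\<And>I. I \<in> M \<Longrightarrow> initial_infoset i I \<and> (\<exists>\<sigma>\<in>opps G i. opp_reaches G i \<sigma> I)"
    and fin: "\<And>I. I \<in> M \<Longrightarrow> finite (set_pmf (\<beta> I))"
  shows "best_reply G i (pmf_of_set M \<bind> \<beta>) s"
proof -
  have EU_mix: "EU G i (pmf_of_set M \<bind> \<beta>) x = (\<Sum>I\<in>M. inverse (real (card M)) * EU G i (\<beta> I) x)"
    for x
    unfolding EU_def using M(1,2) fin by (simp add: pmf_expectation_bind_pmf_of_set)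
  have "EU G i (pmf_of_set M \<bind> \<beta>) s' \<le> EU G i (pmf_of_set M \<bind> \<beta>) s" if s': "s' \<in> strats G i" for s'
    unfolding EU_mix
  proof (rule sum_mono)
    fix I assume "I \<in> M"
    then obtain \<sigma> where "initial_infoset i I" "\<sigma> \<in> opps G i" "opp_reaches G i \<sigma> I" using M(3) by blast
    then have "EU G i (\<beta> I) s' \<le> EU G i (\<beta> I) s" using rational_initial_optimal[OF i ra _ _ _ s'] by blast
    then show "inverse (real (card M)) * EU G i (\<beta> I) s' \<le> inverse (real (card M)) * EU G i (\<beta> I) s"
      by (simp add: mult_left_mono)
  qed
  then show ?thesis using ra unfolding best_reply_def rational_all_def by blast
qed

lemma ex_best_reply_concentrated:
  assumes i: "i \<in> players G" and ra: "rational_all G i \<beta> s"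
    and X: "X \<subseteq> opps G i" "X \<noteq> {}"
    and conc: "\<And>I \<sigma>. initial_infoset i I \<Longrightarrow> \<sigma> \<in> X \<Longrightarrow> opp_reaches G i \<sigma> I \<Longrightarrow> set_pmf (\<beta> I) \<subseteq> X"
  shows "\<exists>\<mu>. set_pmf \<mu> \<subseteq> X \<and> best_reply G i \<mu> s"
proof -
  define M where "M = {I. initial_infoset i I \<and> (\<exists>\<sigma>\<in>X. opp_reaches G i \<sigma> I)}"
  have finM: "finite M"
    using finite_infosets[of i] by (rule finite_subset[rotated]) (auto simp: M_def initial_infoset_def)
  have MX: "set_pmf (\<beta> I) \<subseteq> X" if "I \<in> M" for I using conc that unfolding M_def by blast
  show ?thesis
  proof (cases "M = {}")
    case False
    have "best_reply G i (pmf_of_set M \<bind> \<beta>) s"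
    proof (rule best_reply_mixture_initial[OF i ra finM False])
      show "initial_infoset i I \<and> (\<exists>\<sigma>\<in>opps G i. opp_reaches G i \<sigma> I)" if "I \<in> M" for I
        using that X(1) unfolding M_def by blast
      show "finite (set_pmf (\<beta> I))" if "I \<in> M" for I
        using MX[OF that] X(1) finite_opps by (meson finite_subset)
    qed
    moreover have "set_pmf (pmf_of_set M \<bind> \<beta>) \<subseteq> X" using MX finM False by (simp add: UN_least)
    ultimately show ?thesis by blast
  next
    case True
    obtain \<sigma> where \<sigma>: "\<sigma> \<in> X" using X(2) by blast
    \<comment> \<open>\<open>\<sigma>\<close> would reach an initial information set, which would then belong to \<open>M\<close>\<close>
    have "\<not> opp_reaches G i \<sigma> I" if I: "I \<in> infosets G i" for I
    proof
      assume "opp_reaches G i \<sigma> I"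
      then obtain I0 where "initial_infoset i I0" "\<sigma> \<in> oppsI G i I0"
        using opps_reaching_initial[OF i I] \<sigma> X(1) by blast
      then have "I0 \<in> M" unfolding M_def oppsI_def using \<sigma> by blast
      then show False using True by simp
    qed
    then have "best_reply G i (return_pmf \<sigma>) s"
      using best_reply_unreaching[OF i] \<sigma> X(1) ra unfolding rational_all_def by blast
    then show ?thesis using \<sigma> by (intro exI[of _ "return_pmf \<sigma>"]) simp
  qed
qed

lemma oppsX_subset_opps: "oppsX G X i \<subseteq> opps G i"
  unfolding oppsX_def by blast

lemma oppsX_mono: "(\<And>j. j \<in> players G \<Longrightarrow> X j \<subseteq> Y j) \<Longrightarrow> oppsX G X i \<subseteq> oppsX G Y i"
  unfolding oppsX_def by blast

lemma oppsX_nonempty: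
  assumes X: "\<And>j. j \<in> players G \<Longrightarrow> X j \<noteq> {} \<and> X j \<subseteq> strats G j"
  shows "oppsX G X i \<noteq> {}"
proof -
  define Y where "Y j = (if j \<in> players G then X j else strats G j)" for j
  have Y: "Y j \<noteq> {} \<and> Y j \<subseteq> strats G j" for j
    using X[of j] strats_nonempty[of j] unfolding Y_def by auto
  define \<sigma> where "\<sigma> j = (if j \<in> allpl G \<and> j \<noteq> i then SOME x. x \<in> Y j else undefined)" for j
  have \<sigma>Y: "\<sigma> j \<in> Y j" if "j \<in> allpl G" "j \<noteq> i" for j
    using that Y[of j] unfolding \<sigma>_def by (simp add: some_in_eq)
  have "\<sigma> \<in> opps G i"
    unfolding opps_def
  proof (intro CollectI allI conjI impI)
    fix j assume "j \<in> allpl G \<and> j \<noteq> i"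
    then show "\<sigma> j \<in> strats G j" using \<sigma>Y Y by blast
  next
    fix j assume "\<not> (j \<in> allpl G \<and> j \<noteq> i)"
    then show "\<sigma> j = undefined" unfolding \<sigma>_def by (rule if_not_P)
  qed
  moreover have "\<sigma> j \<in> X j" if "j \<in> players G" "j \<noteq> i" for j
    using \<sigma>Y[of j] that unfolding Y_def allpl_def by simp
  ultimately show ?thesis unfolding oppsX_def by blast
qed

end

lemma length_strong_levels: "length (strong_levels G \<beta> n) = n"
  by (induction n) auto

lemma strong_levels_nth: "l \<in> {1..n} \<Longrightarrow> strong_levels G \<beta> n ! (l - 1) = strong_L G \<beta> l"
proof (induction n)
  case (Suc n)
  then show ?case
    by (cases "l = Suc n") (auto simp: strong_L_def nth_append length_strong_levels)
qed simp

lemma strong_L_Suc: "strong_L G \<beta> (Suc n) = next_level G \<beta> (strong_levels G \<beta> n)"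
  by (simp add: strong_L_def nth_append length_strong_levels)

locale level_k_setting = game G for G :: "('i,'a) efg" +
  fixes \<beta>bar1 :: "'i \<Rightarrow> ('i,'a) bsys" and \<beta>1 :: "'i \<Rightarrow> ('i,'a) prof pmf"
  assumes initial_belief_system: "i \<in> players G \<Longrightarrow> \<beta>bar1 i \<in> belief_systems G i"
    and set_prior: "i \<in> players G \<Longrightarrow> set_pmf (\<beta>1 i) = opps G i"
    and prior_consistent:
      "i \<in> players G \<Longrightarrow> I \<in> infosets G i \<Longrightarrow> \<beta>bar1 i I = cond_pmf (\<beta>1 i) (oppsI G i I)"
begin

subsection \<open>Beliefs induced by a list of levels\<close>

definition level_reaches :: "('i \<Rightarrow> ('i,'a) strat set) list \<Rightarrow> 'i \<Rightarrow> nat \<Rightarrow> ('i,'a) hist set \<Rightarrow> bool" where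
  "level_reaches ls i l I \<longleftrightarrow> (\<exists>\<sigma>\<in>oppsX G (ls ! (l - 1)) i. opp_reaches G i \<sigma> I)"

definition reached_by_levels :: "('i \<Rightarrow> ('i,'a) strat set) list \<Rightarrow> 'i \<Rightarrow> ('i,'a) hist set \<Rightarrow> bool" where
  "reached_by_levels ls i I \<longleftrightarrow> (\<exists>l\<in>{1..length ls}. level_reaches ls i l I)"

definition last_reaching_level :: "('i \<Rightarrow> ('i,'a) strat set) list \<Rightarrow> 'i \<Rightarrow> ('i,'a) hist set \<Rightarrow> nat" where
  "last_reaching_level ls i I = (GREATEST l. l \<in> {1..length ls} \<and> level_reaches ls i l I)"

lemma Bk_iff:
  "ls \<noteq> [] \<Longrightarrow> \<beta> \<in> Bk G \<beta>bar1 ls i \<longleftrightarrow> \<beta> \<in> belief_systems G i \<and>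
   (\<forall>I\<in>infosets G i.
      (reached_by_levels ls i I \<longrightarrow> set_pmf (\<beta> I) \<subseteq> oppsX G (ls ! (last_reaching_level ls i I - 1)) i) \<and>
      (\<not> reached_by_levels ls i I \<longrightarrow> \<beta> I = \<beta>bar1 i I))"
  unfolding Bk_def reached_by_levels_def last_reaching_level_def level_reaches_def by simp

lemma last_reaching_level:
  assumes "reached_by_levels ls i I"
  shows "last_reaching_level ls i I \<in> {1..length ls}" "level_reaches ls i (last_reaching_level ls i I) I"
    and "l \<in> {1..length ls} \<Longrightarrow> level_reaches ls i l I \<Longrightarrow> l \<le> last_reaching_level ls i I"
proof -
  obtain l0 where l0: "l0 \<in> {1..length ls}" "level_reaches ls i l0 I"
    using assms unfolding reached_by_levels_def by blast
  have "last_reaching_level ls i I \<in> {1..length ls} \<and> level_reaches ls i (last_reaching_level ls i I) I"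
    unfolding last_reaching_level_def by (rule GreatestI_nat[of _ l0 "length ls"]) (use l0 in auto)
  then show "last_reaching_level ls i I \<in> {1..length ls}"
    "level_reaches ls i (last_reaching_level ls i I) I" by auto
  show "l \<in> {1..length ls} \<Longrightarrow> level_reaches ls i l I \<Longrightarrow> l \<le> last_reaching_level ls i I"
    unfolding last_reaching_level_def by (intro Greatest_le_nat[of _ l "length ls"]) auto
qed

lemma level_reaches_precedes:
  "i \<in> players G \<Longrightarrow> I \<in> infosets G i \<Longrightarrow> I' \<in> infosets G i \<Longrightarrow> precedes I I' \<Longrightarrow>
   level_reaches ls i l I' \<Longrightarrow> level_reaches ls i l I"
  unfolding level_reaches_def using opp_reaches_precedes by blast

definition nonempty_levels :: "('i \<Rightarrow> ('i,'a) strat set) list \<Rightarrow> bool" where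
  "nonempty_levels ls \<longleftrightarrow> (\<forall>X\<in>set ls. \<forall>j\<in>players G. X j \<noteq> {} \<and> X j \<subseteq> strats G j)"

definition level_prior :: "('i \<Rightarrow> ('i,'a) strat set) list \<Rightarrow> 'i \<Rightarrow> nat \<Rightarrow> ('i,'a) prof pmf" where
  "level_prior ls i l = pmf_of_set (oppsX G (ls ! (l - 1)) i)"

definition level_belief :: "('i \<Rightarrow> ('i,'a) strat set) list \<Rightarrow> 'i \<Rightarrow> ('i,'a) bsys" where
  "level_belief ls i I = (if reached_by_levels ls i I
     then cond_pmf (level_prior ls i (last_reaching_level ls i I)) (oppsI G i I) else \<beta>bar1 i I)"

context
  fixes ls i
  assumes ls: "nonempty_levels ls" and i: "i \<in> players G"
begin

lemma set_level_prior:
  assumes "l \<in> {1..length ls}"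
  shows "set_pmf (level_prior ls i l) = oppsX G (ls ! (l - 1)) i"
proof -
  have "ls ! (l - 1) \<in> set ls" using assms by auto
  then have "(ls ! (l - 1)) j \<noteq> {} \<and> (ls ! (l - 1)) j \<subseteq> strats G j" if "j \<in> players G" for j
    using ls that unfolding nonempty_levels_def by blast
  then have "oppsX G (ls ! (l - 1)) i \<noteq> {}" by (rule oppsX_nonempty)
  moreover have "finite (oppsX G (ls ! (l - 1)) i)" using finite_subset[OF oppsX_subset_opps finite_opps] .
  ultimately show ?thesis unfolding level_prior_def by simp
qed

lemma level_reaches_iff_prior:
  assumes "l \<in> {1..length ls}"
  shows "level_reaches ls i l I \<longleftrightarrow> set_pmf (level_prior ls i l) \<inter> oppsI G i I \<noteq> {}"
proof -
  have "level_reaches ls i l I \<longleftrightarrow> oppsX G (ls ! (l - 1)) i \<inter> oppsI G i I \<noteq> {}"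
    unfolding level_reaches_def oppsI_def using oppsX_subset_opps by blast
  then show ?thesis using set_level_prior[OF assms] by simp
qed

lemma set_level_belief:
  assumes "reached_by_levels ls i I"
  shows "set_pmf (level_belief ls i I) = oppsX G (ls ! (last_reaching_level ls i I - 1)) i \<inter> oppsI G i I"
proof -
  let ?l = "last_reaching_level ls i I"
  have "set_pmf (level_prior ls i ?l) \<inter> oppsI G i I \<noteq> {}"
    using level_reaches_iff_prior last_reaching_level(1,2)[OF assms] by blast
  moreover have "level_belief ls i I = cond_pmf (level_prior ls i ?l) (oppsI G i I)"
    using assms by (simp add: level_belief_def)
  ultimately show ?thesis using set_level_prior[OF last_reaching_level(1)[OF assms]] by simp
qed

lemma level_belief_cond_reached:
  assumes I: "I \<in> infosets G i" and I': "I' \<in> infosets G i" and "precedes I I'"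
    and r': "reached_by_levels ls i I'" and meet: "set_pmf (level_belief ls i I) \<inter> oppsI G i I' \<noteq> {}"
  shows "level_belief ls i I' = cond_pmf (level_belief ls i I) (oppsI G i I')"
proof -
  let ?l' = "last_reaching_level ls i I'"
  have "level_reaches ls i ?l' I"
    using level_reaches_precedes[OF i I I' \<open>precedes I I'\<close> last_reaching_level(2)[OF r']] .
  then have r: "reached_by_levels ls i I"
    unfolding reached_by_levels_def using last_reaching_level(1)[OF r'] by blast
  let ?l = "last_reaching_level ls i I"
  \<comment> \<open>both information sets are conditioned from the prior of the same level\<close>
  have "?l' \<le> ?l"
    using last_reaching_level(3)[OF r last_reaching_level(1)[OF r'] \<open>level_reaches ls i ?l' I\<close>] .
  moreover have "level_reaches ls i ?l I'"
    using meet set_level_belief[OF r] unfolding level_reaches_def oppsI_def by blast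
  then have "?l \<le> ?l'" using last_reaching_level(3)[OF r' last_reaching_level(1)[OF r]] by blast
  ultimately have eq: "?l = ?l'" by simp
  have sub: "oppsI G i I' \<subseteq> oppsI G i I"
    using opp_reaches_precedes[OF i I I' \<open>precedes I I'\<close>] unfolding oppsI_def by blast
  have fin: "finite (set_pmf (level_prior ls i ?l))"
    using set_level_prior[OF last_reaching_level(1)[OF r]]
      finite_subset[OF oppsX_subset_opps finite_opps] by simp
  have "cond_pmf (level_belief ls i I) (oppsI G i I') = cond_pmf (level_prior ls i ?l) (oppsI G i I \<inter> oppsI G i I')"
    using cond_pmf_cond_pmf[OF fin] meet level_reaches_iff_prior last_reaching_level[OF r] r
    by (simp add: level_belief_def)
  also have "oppsI G i I \<inter> oppsI G i I' = oppsI G i I'" using sub by blast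
  finally show ?thesis using eq r' by (simp add: level_belief_def)
qed

lemma level_belief_unreached:
  assumes I': "I' \<in> infosets G i" and r': "\<not> reached_by_levels ls i I'"
    and meet: "set_pmf (level_belief ls i I) \<inter> oppsI G i I' \<noteq> {}"
  shows "\<not> reached_by_levels ls i I"
proof
  assume r: "reached_by_levels ls i I"
  then have "level_reaches ls i (last_reaching_level ls i I) I'"
    using meet set_level_belief[OF r] unfolding level_reaches_def oppsI_def by blast
  then show False using r' last_reaching_level(1)[OF r] unfolding reached_by_levels_def by blast
qed

lemma set_level_belief_subset:
  assumes I: "I \<in> infosets G i"
  shows "set_pmf (level_belief ls i I) \<subseteq> oppsI G i I"
proof (cases "reached_by_levels ls i I")
  case True then show ?thesis using set_level_belief by blast
next
  case False
  have "\<forall>I\<in>infosets G i. set_pmf (\<beta>bar1 i I) \<subseteq> oppsI G i I"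
    using initial_belief_system[OF i] unfolding belief_systems_def mem_Collect_eq by (rule conjunct1)
  then have "set_pmf (\<beta>bar1 i I) \<subseteq> oppsI G i I" using I by blast
  then show ?thesis using False by (simp add: level_belief_def)
qed

lemma level_belief_belief_system: "level_belief ls i \<in> belief_systems G i"
proof -
  have \<beta>bar1: "\<forall>I\<in>infosets G i. \<forall>I'\<in>infosets G i. precedes I I' \<and> measure_pmf.prob (\<beta>bar1 i I) (oppsI G i I') > 0 \<longrightarrow>
       \<beta>bar1 i I' = cond_pmf (\<beta>bar1 i I) (oppsI G i I')"
    using initial_belief_system[OF i] unfolding belief_systems_def mem_Collect_eq by (rule conjunct2)
  have cond: "level_belief ls i I' = cond_pmf (level_belief ls i I) (oppsI G i I')"
    if I: "I \<in> infosets G i" and I': "I' \<in> infosets G i" and p: "precedes I I'"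
      and pos: "measure_pmf.prob (level_belief ls i I) (oppsI G i I') > 0" for I I'
  proof -
    have meet: "set_pmf (level_belief ls i I) \<inter> oppsI G i I' \<noteq> {}"
    proof
      assume "set_pmf (level_belief ls i I) \<inter> oppsI G i I' = {}"
      then have "measure_pmf.prob (level_belief ls i I) (oppsI G i I') = 0"
        by (simp add: measure_pmf_zero_iff)
      then show False using pos by simp
    qed
    show ?thesis
    proof (cases "reached_by_levels ls i I'")
      case True
      show ?thesis by (rule level_belief_cond_reached[OF I I' p True meet])
    next
      case False
      have eqs: "level_belief ls i I = \<beta>bar1 i I" "level_belief ls i I' = \<beta>bar1 i I'"
        using level_belief_unreached[OF I' False meet] False by (simp_all add: level_belief_def)
      then have "measure_pmf.prob (\<beta>bar1 i I) (oppsI G i I') > 0" using pos by simp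
      then have "\<beta>bar1 i I' = cond_pmf (\<beta>bar1 i I) (oppsI G i I')"
        using \<beta>bar1 I I' p by blast
      then show ?thesis using eqs by simp
    qed
  qed
  show ?thesis
    unfolding belief_systems_def using set_level_belief_subset cond by blast
qed

lemma level_belief_Bk: "level_belief ls i \<in> Bk G \<beta>bar1 ls i"
proof (cases "ls = []")
  case True
  then have "level_belief ls i = \<beta>bar1 i"
    by (auto simp: level_belief_def reached_by_levels_def)
  then show ?thesis using True by (simp add: Bk_def)
next
  case False
  show ?thesis
    unfolding Bk_iff[OF False]
  proof (intro conjI ballI impI)
    show "level_belief ls i \<in> belief_systems G i" by (rule level_belief_belief_system)
    fix I
    show "set_pmf (level_belief ls i I) \<subseteq> oppsX G (ls ! (last_reaching_level ls i I - 1)) i"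
      if "reached_by_levels ls i I" using set_level_belief[OF that] by blast
    show "level_belief ls i I = \<beta>bar1 i I" if "\<not> reached_by_levels ls i I"
      using that by (simp add: level_belief_def)
  qed
qed

text \<open>The priors uniform on the opponent profiles of the levels, latest first, followed by the
full-support prior: the first of them meeting \<open>oppsI G i I\<close> is the one conditioned in
\<open>level_belief ls i I\<close>.\<close>
definition lex_priors :: "('i,'a) prof pmf list" where
  "lex_priors = map (\<lambda>t. level_prior ls i (length ls - t)) [0..<length ls] @ [\<beta>1 i]"

lemma lex_priors_nth:
  "t \<le> length ls \<Longrightarrow> lex_priors ! t = (if t < length ls then level_prior ls i (length ls - t) else \<beta>1 i)"
  unfolding lex_priors_def by (auto simp: nth_append)

lemma length_lex_priors: "length lex_priors = Suc (length ls)"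
  by (simp add: lex_priors_def)

lemma lex_priors_opps: "\<forall>p\<in>set lex_priors. set_pmf p \<subseteq> opps G i"
proof
  fix p assume "p \<in> set lex_priors"
  then obtain t where t: "t < Suc (length ls)" "p = lex_priors ! t"
    by (metis in_set_conv_nth length_lex_priors)
  show "set_pmf p \<subseteq> opps G i"
  proof (cases "t < length ls")
    case True
    then have "length ls - t \<in> {1..length ls}" by auto
    moreover have "p = level_prior ls i (length ls - t)" using t True lex_priors_nth[of t] by simp
    ultimately have "set_pmf p = oppsX G (ls ! (length ls - t - 1)) i" using set_level_prior by simp
    then show ?thesis using oppsX_subset_opps by simp
  next
    case False
    then have "p = \<beta>1 i" using t lex_priors_nth[of t] by simp
    then show ?thesis using set_prior[OF i] by simp
  qed
qed

lemma lex_priors_unreaching: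
  "t < length ls \<Longrightarrow> \<not> level_reaches ls i (length ls - t) I \<Longrightarrow> set_pmf (lex_priors ! t) \<inter> oppsI G i I = {}"
  using level_reaches_iff_prior[of "length ls - t"] lex_priors_nth[of t] by auto

lemma lex_priors_first_reaching:
  assumes I: "I \<in> infosets G i" and ne: "oppsI G i I \<noteq> {}"
  shows "\<exists>t<length lex_priors. (\<forall>t'<t. set_pmf (lex_priors ! t') \<inter> oppsI G i I = {}) \<and>
    set_pmf (lex_priors ! t) \<inter> oppsI G i I \<noteq> {} \<and> level_belief ls i I = cond_pmf (lex_priors ! t) (oppsI G i I)"
proof -
  let ?n = "length ls"
  show ?thesis
  proof (cases "reached_by_levels ls i I")
    case True
    note l = last_reaching_level[OF True]
    let ?l = "last_reaching_level ls i I"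
    show ?thesis
    proof (intro exI[of _ "?n - ?l"] conjI allI impI)
      show "?n - ?l < length lex_priors" by (simp add: length_lex_priors)
      have prior: "lex_priors ! (?n - ?l) = level_prior ls i ?l"
        using lex_priors_nth[of "?n - ?l"] l(1) by auto
      show "set_pmf (lex_priors ! (?n - ?l)) \<inter> oppsI G i I \<noteq> {}"
        using prior l(1,2) level_reaches_iff_prior by simp
      show "level_belief ls i I = cond_pmf (lex_priors ! (?n - ?l)) (oppsI G i I)"
        using prior True by (simp add: level_belief_def)
      fix t' assume "t' < ?n - ?l"
      moreover have "?n - t' \<in> {1..?n}" "?l < ?n - t'" using \<open>t' < ?n - ?l\<close> by auto
      then have "\<not> level_reaches ls i (?n - t') I" using l(3)[of "?n - t'"] by fastforce
      ultimately show "set_pmf (lex_priors ! t') \<inter> oppsI G i I = {}" using lex_priors_unreaching by simp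
    qed
  next
    case False
    show ?thesis
    proof (intro exI[of _ ?n] conjI allI impI)
      show "?n < length lex_priors" by (simp add: length_lex_priors)
      have "lex_priors ! ?n = \<beta>1 i" using lex_priors_nth[of ?n] by simp
      then show "set_pmf (lex_priors ! ?n) \<inter> oppsI G i I \<noteq> {}"
        using ne set_prior[OF i] oppsI_subset_opps[of i I] by auto
      show "level_belief ls i I = cond_pmf (lex_priors ! ?n) (oppsI G i I)"
        using lex_priors_nth[of ?n] False prior_consistent[OF i I] by (simp add: level_belief_def)
      fix t' assume "t' < ?n"
      moreover have "\<not> level_reaches ls i (?n - t') I"
        using False \<open>t' < ?n\<close> unfolding reached_by_levels_def by auto
      ultimately show "set_pmf (lex_priors ! t') \<inter> oppsI G i I = {}" using lex_priors_unreaching by simp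
    qed
  qed
qed

lemma ex_rational_level_belief: "\<exists>s. rational_all G i (level_belief ls i) s"
proof -
  obtain s where "s \<in> lex_best_replies i lex_priors (strats G i)"
    using lex_best_replies_nonempty[OF finite_strats strats_nonempty] by blast
  then have "rational_all G i (level_belief ls i) s"
    using lex_best_replies_rational_all[OF i lex_priors_opps] lex_priors_first_reaching by blast
  then show ?thesis by blast
qed

end

subsection \<open>Strong levels versus normal-form levels\<close>

lemma strong_L_Suc_subset_strats: "strong_L G \<beta>bar1 (Suc n) j \<subseteq> strats G j"
  unfolding strong_L_Suc next_level_def rational_all_def by blast

lemma strong_L_Suc_nonempty:
  assumes ls: "nonempty_levels (strong_levels G \<beta>bar1 n)" and i: "i \<in> players G"
  shows "strong_L G \<beta>bar1 (Suc n) i \<noteq> {}"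
proof -
  obtain s where "rational_all G i (level_belief (strong_levels G \<beta>bar1 n) i) s"
    using ex_rational_level_belief[OF ls i] by blast
  then show ?thesis
    using level_belief_Bk[OF ls i] unfolding strong_L_Suc next_level_def by blast
qed

lemma nonempty_strong_levels: "nonempty_levels (strong_levels G \<beta>bar1 n)"
proof (induction n)
  case (Suc n)
  then show ?case
    using strong_L_Suc_nonempty[OF Suc] strong_L_Suc_subset_strats[of n]
    unfolding nonempty_levels_def by (simp add: strong_L_Suc)
qed (simp add: nonempty_levels_def)

lemma strong_L_1_subset_nf_L:
  assumes i: "i \<in> players G"
  shows "strong_L G \<beta>bar1 1 i \<subseteq> nf_L G \<beta>1 1 i"
proof
  fix s assume "s \<in> strong_L G \<beta>bar1 1 i"
  then have "rational_all G i (\<beta>bar1 i) s"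
    using strong_L_Suc[of G \<beta>bar1 0] by (simp add: next_level_def Bk_def)
  then have "best_reply G i (\<beta>1 i) s"
    using rational_best_reply_prior[OF i _ equalityD1[OF set_prior[OF i]]]
      prior_consistent[OF i] initial_infoset_def by blast
  then show "s \<in> nf_L G \<beta>1 1 i" by simp
qed

text \<open>At level \<open>n + 1\<close>, the beliefs at initial information sets reached by level-\<open>n\<close> opponents
are concentrated on level-\<open>n\<close> profiles, since \<open>n\<close> is then the last level reaching them.\<close>
lemma strong_L_Suc_subset_nf_L:
  assumes i: "i \<in> players G" and n: "n \<ge> 1"
    and IH: "\<And>j. j \<in> players G \<Longrightarrow> strong_L G \<beta>bar1 n j \<subseteq> nf_L G \<beta>1 n j"
  shows "strong_L G \<beta>bar1 (Suc n) i \<subseteq> nf_L G \<beta>1 (Suc n) i"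
proof
  fix s assume "s \<in> strong_L G \<beta>bar1 (Suc n) i"
  let ?ls = "strong_levels G \<beta>bar1 n"
  let ?X = "oppsX G (strong_L G \<beta>bar1 n) i"
  obtain \<beta> where \<beta>: "\<beta> \<in> Bk G \<beta>bar1 ?ls i" and ra: "rational_all G i \<beta> s"
    using \<open>s \<in> _\<close> unfolding strong_L_Suc next_level_def by blast
  have len: "length ?ls = n" by (rule length_strong_levels)
  have last: "?ls ! (n - 1) = strong_L G \<beta>bar1 n" using strong_levels_nth[of n n] n by simp
  have "set_pmf (level_prior ?ls i n) = ?X"
    using set_level_prior[OF nonempty_strong_levels[of n] i, of n] len last n by simp
  then have "?X \<noteq> {}" using set_pmf_not_empty by metis
  moreover have "set_pmf (\<beta> I) \<subseteq> ?X"
    if I: "initial_infoset i I" and \<sigma>: "\<sigma> \<in> ?X" "opp_reaches G i \<sigma> I" for I \<sigma>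
  proof -
    have reach: "level_reaches ?ls i n I" unfolding level_reaches_def last using \<sigma> by blast
    then have r: "reached_by_levels ?ls i I" unfolding reached_by_levels_def using len n by auto
    have "last_reaching_level ?ls i I = n"
      using last_reaching_level(1)[OF r] last_reaching_level(3)[OF r _ reach] len n by fastforce
    moreover have "?ls \<noteq> []" using len n by auto
    then have "set_pmf (\<beta> I) \<subseteq> oppsX G (?ls ! (last_reaching_level ?ls i I - 1)) i"
      using \<beta> Bk_iff r I unfolding initial_infoset_def by blast
    ultimately show ?thesis using last by simp
  qed
  ultimately obtain \<mu> where "set_pmf \<mu> \<subseteq> ?X" "best_reply G i \<mu> s"
    using ex_best_reply_concentrated[OF i ra oppsX_subset_opps] by blast
  moreover have "?X \<subseteq> oppsX G (nf_L G \<beta>1 n) i" using IH by (rule oppsX_mono)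
  moreover obtain m where "n = Suc m" using n by (cases n) auto
  ultimately show "s \<in> nf_L G \<beta>1 (Suc n) i" by auto
qed

lemma strong_L_subset_nf_L:
  "k \<ge> 1 \<Longrightarrow> i \<in> players G \<Longrightarrow> strong_L G \<beta>bar1 k i \<subseteq> nf_L G \<beta>1 k i"
proof (induction k arbitrary: i)
  case (Suc n)
  show ?case
  proof (cases "n = 0")
    case True
    then show ?thesis using strong_L_1_subset_nf_L[OF Suc.prems(2)] by simp
  next
    case False
    then show ?thesis using strong_L_Suc_subset_nf_L[OF Suc.prems(2)] Suc.IH by simp
  qed
qed simp

end

lemma Zset_mono: "(\<And>j. j \<in> players G \<Longrightarrow> X j \<subseteq> Y j) \<Longrightarrow> Zset G X \<subseteq> Zset G Y"
  unfolding Zset_def by blast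

theorem proposition4:
  fixes G :: "('i,'a) efg"
    and \<beta>bar1 :: "'i \<Rightarrow> ('i,'a) bsys"
    and \<beta>1 :: "'i \<Rightarrow> ('i,'a) prof pmf"
    and k :: nat
  assumes "wf_efg G"
    and "\<forall>i\<in>players G. \<beta>bar1 i \<in> belief_systems G i \<and> full_support_bs G i (\<beta>bar1 i)"
    and "\<forall>i\<in>players G. full_support_nf G i (\<beta>1 i) \<and> consistent G i (\<beta>1 i) (\<beta>bar1 i)"
    and "k \<ge> 1"
  shows "Zset G (strong_L G \<beta>bar1 k) \<subseteq> Zset G (nf_L G \<beta>1 k)"
proof -
  interpret level_k_setting G \<beta>bar1 \<beta>1
    using assms(1-3) unfolding full_support_nf_def consistent_def by unfold_locales blast+
  show ?thesis using strong_L_subset_nf_L[OF assms(4)] by (rule Zset_mono)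
qed

end
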